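(* Let $E$ be a separable Banach space over $K$ with dual $E^*$, let $X$ be an $E$-valued $K$-Gaussian random variable, and set $$S=\{x\in E:|T(x)|\le\|T(X)\|_\infty\ \text{for all }T\in E^*\}.$$ Then: (i) $S$ is a $D$-submodule of $E$. (ii) If $x\in S$ then $x+X$ has the same law as $X$; if $x\notin S$ then the laws of $x+X$ and $X$ are mutually singular. (iii) $S$ is the closed support of the law of $X$. (iv) $S$ is compact. (v) The law of $X$ is normalised Haar measure on $S$. (vi) If $M$ is a measurable vector subspace of $E$, then $\mathbb{P}\{X\in M\}$ equals $1$ if $S\subset M$ and equals $0$ otherwise.
   Context: $K$ is a local field (locally compact, non-discrete, totally disconnected topological field) with its non-archimedean absolute value $|\cdot|$ ($|x|=0\iff x=0$, $|xy|=|x||y|$, $|x+y|\le|x|\vee|y|$); $D=\{x\in K:|x|\le1\}$. A normed space over $K$ is a $K$-vector space $E$ with $\|\cdot\|:E\to[0,\infty)$, $\|x\|=0\iff x=0$, $\|\alpha x\|=|\alpha|\|x\|$, $\|x+y\|\le\|x\|\vee\|y\|$; a Banach space if complete. $E^*$ is the space of continuous $K$-linear functionals $E\to K$. For a $K$-valued random variable $Y$, $\|Y\|_\infty$ is the essential supremum of $|Y|$. $K^2$ is normed by $|(x_1,x_2)|=|x_1|\vee|x_2|$; $v_1,v_2\in K^2$ are orthonormal if $|v_1|=|v_2|=1$ and $|\alpha_1v_1+\alpha_2v_2|=|\alpha_1|\vee|\alpha_2|$ for all $\alpha_i\in K$. An $E$-valued random variable $X$ is $K$-Gaussian if whenever $X_1,X_2$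 are independent copies of $X$ and $(\alpha_{11},\alpha_{12}),(\alpha_{21},\alpha_{22})\in K^2$ are orthonormal, $(\alpha_{11}X_1+\alpha_{12}X_2,\alpha_{21}X_1+\alpha_{22}X_2)$ has the same law as $(X_1,X_2)$. A measurable vector subspace is a $K$-linear subspace that is a Borel set. *)

theory Defs
  imports "HOL-Probability.Probability"
begin

definition nonarch_abs :: "('k::field \<Rightarrow> real) \<Rightarrow> bool" where
  "nonarch_abs absK \<longleftrightarrow>
     (\<forall>x. absK x \<ge> 0) \<and> (\<forall>x. absK x = 0 \<longleftrightarrow> x = 0) \<and>
     (\<forall>x y. absK (x * y) = absK x * absK y) \<and>
     (\<forall>x y. absK (x + y) \<le> max (absK x) (absK y))"

definition local_field :: "('k::{field,metric_space} \<Rightarrow> real) \<Rightarrow> bool" where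
  "local_field absK \<longleftrightarrow>
     nonarch_abs absK \<and>
     (\<forall>x y. dist x y = absK (x - y)) \<and>
     locally compact (UNIV :: 'k set) \<and>
     (\<exists>x::'k. x islimpt UNIV) \<and>
     (\<forall>C::'k set. connected C \<longrightarrow> (\<forall>x\<in>C. \<forall>y\<in>C. x = y))"

definition K_normed_space ::
  "('k::field \<Rightarrow> real) \<Rightarrow> ('k \<Rightarrow> 'e::{ab_group_add,metric_space} \<Rightarrow> 'e) \<Rightarrow> ('e \<Rightarrow> real) \<Rightarrow> bool" where
  "K_normed_space absK smul nrm \<longleftrightarrow>
     vector_space smul \<and>
     (\<forall>x. nrm x \<ge> 0) \<and> (\<forall>x. nrm x = 0 \<longleftrightarrow> x = 0) \<and>
     (\<forall>a x. nrm (smul a x) = absK a * nrm x) \<and>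
     (\<forall>x y. nrm (x + y) \<le> max (nrm x) (nrm y)) \<and>
     (\<forall>x y. dist x y = nrm (x - y))"

definition K_banach_space ::
  "('k::field \<Rightarrow> real) \<Rightarrow> ('k \<Rightarrow> 'e::{ab_group_add,metric_space} \<Rightarrow> 'e) \<Rightarrow> ('e \<Rightarrow> real) \<Rightarrow> bool" where
  "K_banach_space absK smul nrm \<longleftrightarrow> K_normed_space absK smul nrm \<and> Topological_Spaces.complete (UNIV :: 'e set)"

definition separable_space :: "'e::metric_space itself \<Rightarrow> bool" where
  "separable_space _ \<longleftrightarrow> (\<exists>A::'e set. countable A \<and> closure A = UNIV)"

definition dual_space :: "('k::{field,metric_space} \<Rightarrow> 'e::{ab_group_add,metric_space} \<Rightarrow> 'e) \<Rightarrow> ('e \<Rightarrow> 'k) set" where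
  "dual_space smul = {T. Vector_Spaces.linear smul ((*) :: 'k \<Rightarrow> 'k \<Rightarrow> 'k) T \<and> continuous_on UNIV T}"

definition orthonormal2 :: "('k::field \<Rightarrow> real) \<Rightarrow> 'k \<times> 'k \<Rightarrow> 'k \<times> 'k \<Rightarrow> bool" where
  "orthonormal2 absK v w \<longleftrightarrow>
     max (absK (fst v)) (absK (snd v)) = 1 \<and> max (absK (fst w)) (absK (snd w)) = 1 \<and>
     (\<forall>a b. max (absK (a * fst v + b * fst w)) (absK (a * snd v + b * snd w))
              = max (absK a) (absK b))"

text \<open>K-Gaussian: for independent copies X1, X2 of X (whose joint law is the product of the
  law of X with itself) and orthonormal rows (a11,a12), (a21,a22), the pair
  (a11 X1 + a12 X2, a21 X1 + a22 X2) has the same law as (X1, X2).\<close>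
definition K_gaussian ::
  "('k::field \<Rightarrow> real) \<Rightarrow> ('k \<Rightarrow> 'e::{ab_group_add,metric_space} \<Rightarrow> 'e) \<Rightarrow> 'w measure \<Rightarrow> ('w \<Rightarrow> 'e) \<Rightarrow> bool" where
  "K_gaussian absK smul P X \<longleftrightarrow>
     (let \<mu> = distr P borel X in
      \<forall>a11 a12 a21 a22. orthonormal2 absK (a11, a12) (a21, a22) \<longrightarrow>
        distr (\<mu> \<Otimes>\<^sub>M \<mu>) (\<mu> \<Otimes>\<^sub>M \<mu>)
          (\<lambda>(x1, x2). (smul a11 x1 + smul a12 x2, smul a21 x1 + smul a22 x2)) = \<mu> \<Otimes>\<^sub>M \<mu>)"

text \<open>D-submodule, D = closed unit ball of K.\<close>
definition D_submodule ::
  "('k::field \<Rightarrow> real) \<Rightarrow> ('k \<Rightarrow> 'e::ab_group_add \<Rightarrow> 'e) \<Rightarrow> 'e set \<Rightarrow> bool" where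
  "D_submodule absK smul S \<longleftrightarrow>
     0 \<in> S \<and> (\<forall>x\<in>S. \<forall>y\<in>S. x + y \<in> S) \<and> (\<forall>a x. absK a \<le> 1 \<and> x \<in> S \<longrightarrow> smul a x \<in> S)"

definition mutually_singular :: "'a measure \<Rightarrow> 'a measure \<Rightarrow> bool" where
  "mutually_singular M N \<longleftrightarrow>
     (\<exists>A \<in> sets M \<inter> sets N. emeasure M A = 0 \<and> emeasure N (space N - A) = 0)"

definition closed_support :: "'a::topological_space measure \<Rightarrow> 'a set" where
  "closed_support M = {x. \<forall>U. open U \<and> x \<in> U \<longrightarrow> emeasure M U > 0}"

definition normalised_haar_on :: "'e::{ab_group_add,topological_space} set \<Rightarrow> 'e measure \<Rightarrow> bool" where
  "normalised_haar_on S M \<longleftrightarrow>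
     sets M = sets borel \<and> emeasure M S = 1 \<and> emeasure M (space M - S) = 0 \<and>
     (\<forall>x\<in>S. \<forall>A\<in>sets borel. A \<subseteq> S \<longrightarrow> emeasure M ((\<lambda>y. x + y) ` A) = emeasure M A)"

definition measurable_vector_subspace ::
  "('k::field \<Rightarrow> 'e::{ab_group_add,topological_space} \<Rightarrow> 'e) \<Rightarrow> 'e set \<Rightarrow> bool" where
  "measurable_vector_subspace smul M \<longleftrightarrow> module.subspace smul M \<and> M \<in> sets borel"

end

theory Submission
  imports Defs
begin

text \<open>Let \<open>\<mu>\<close> be the law of \<open>X\<close>. Since \<open>(1, 0)\<close> and \<open>(a, 1)\<close> are orthonormal for
  \<open>|a| \<le> 1\<close>, Gaussianity makes \<open>\<mu> \<otimes> \<mu>\<close> invariant under the shear \<open>(x1, x2) \<mapsto> (x1, a x1 + x2)\<close>.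
  Computing the measure of \<open>ball s r \<times> B\<close> by Fubini, with \<open>s\<close> in the support \<open>S\<close> of \<open>\<mu>\<close> and
  \<open>B\<close> a ball of radius \<open>r\<close>, shows that \<open>\<mu>\<close> is invariant under translation by \<open>a s\<close>.
  Hence \<open>S\<close> is a \<open>D\<close>-submodule and is exactly the group of translations preserving \<open>\<mu>\<close>:
  \<open>\<mu>\<close> is Haar measure on \<open>S\<close>, a translate by \<open>x \<notin> S\<close> lives on the disjoint coset \<open>x + S\<close>,
  and \<open>S\<close> is compact since disjoint balls of \<open>S\<close> of a fixed radius all have the same positive
  measure. The description of \<open>S\<close> through \<open>E*\<close> is the ultrametric Hahn-Banach separation
  theorem, which holds because \<open>K\<close> is spherically complete and \<open>|K\<^sup>\<times>|\<close> is discrete. For a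
  subspace \<open>M\<close> and \<open>0 < |\<pi>| < 1\<close>, the shears by the distinct scalars \<open>\<pi>\<^sup>n\<close> carry \<open>(E - M) \<times> M\<close> to
  pairwise disjoint sets of measure \<open>\<mu>(E - M) \<mu>(M)\<close>, which is therefore \<open>0\<close>; and
  \<open>\<mu>(M) = 1\<close> forces \<open>S \<subseteq> M\<close> because \<open>M \<inter> (M - s)\<close> is then nonempty for \<open>s \<in> S\<close>.\<close>

lemma closed_support_iff: "x \<in> closed_support M \<longleftrightarrow> (\<forall>U. open U \<and> x \<in> U \<longrightarrow> emeasure M U > 0)"
  unfolding closed_support_def by simp

lemma not_in_closed_support:
  "x \<notin> closed_support M \<Longrightarrow> \<exists>U. open U \<and> x \<in> U \<and> emeasure M U = 0"
  unfolding closed_support_iff by (auto simp: not_less)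

lemma closed_closed_support: "closed (closed_support M)"
  unfolding closed_def open_subopen[of "- closed_support M"]
proof
  fix x assume "x \<in> - closed_support M"
  then obtain U where U: "open U" "x \<in> U" "emeasure M U = 0"
    using not_in_closed_support by blast
  have "y \<notin> closed_support M" if "y \<in> U" for y
    using closed_support_iff[of y M] U(1,3) that by auto
  then have "U \<subseteq> - closed_support M"
    by blast
  then show "\<exists>T. open T \<and> x \<in> T \<and> T \<subseteq> - closed_support M"
    using U by blast
qed

lemma finite_ball_cover_if_separated_card_le:
  fixes S :: "'a::metric_space set"
  assumes "e > 0"
    and bound: "\<And>F. finite F \<Longrightarrow> F \<subseteq> S \<Longrightarrow> pairwise (\<lambda>f f'. e \<le> dist f f') F \<Longrightarrow> card F \<le> N"
  shows "\<exists>k. finite k \<and> S \<subseteq> (\<Union>x\<in>k. ball x e)"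
proof -
  define separated where
    "separated F \<longleftrightarrow> finite F \<and> F \<subseteq> S \<and> pairwise (\<lambda>f f'. e \<le> dist f f') F" for F
  have "separated {}"
    unfolding separated_def by simp
  moreover have "\<forall>F. separated F \<longrightarrow> card F < Suc N"
    unfolding separated_def using bound by (simp add: less_Suc_eq_le)
  ultimately have "\<exists>F. separated F \<and> (\<forall>F'. separated F' \<longrightarrow> card F' \<le> card F)"
    by (rule Lattices_Big.ex_has_greatest_nat)
  then obtain F where F: "finite F" "F \<subseteq> S" "pairwise (\<lambda>f f'. e \<le> dist f f') F"
    and maximal: "\<And>F'. separated F' \<Longrightarrow> card F' \<le> card F"
    unfolding separated_def by blast
  have "g \<in> (\<Union>x\<in>F. ball x e)" if "g \<in> S" for g
  proof (rule ccontr)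
    assume "g \<notin> (\<Union>x\<in>F. ball x e)"
    then have far: "e \<le> dist f g \<and> e \<le> dist g f" if "f \<in> F" for f
      using that by (auto simp: not_less dist_commute)
    then have "g \<notin> F"
      using \<open>e > 0\<close> by fastforce
    have "separated (insert g F)"
      unfolding separated_def pairwise_insert using F far \<open>g \<in> S\<close> by simp
    then have "card (insert g F) \<le> card F"
      by (rule maximal)
    then show False
      using \<open>g \<notin> F\<close> F(1) by simp
  qed
  then show ?thesis
    using F(1) by blast
qed

lemma (in prob_space) Int_not_empty_if_prob_eq_1:
  assumes "prob A = 1" "prob B = 1"
  shows "A \<inter> B \<noteq> {}"
proof
  assume "A \<inter> B = {}"
  have "AE x in M. x \<in> A" "AE x in M. x \<in> B"
    using assms by (simp_all add: AE_prob_1)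
  then have "AE x in M. False"
    by eventually_elim (use \<open>A \<inter> B = {}\<close> in blast)
  then show False
    by (simp add: AE_False)
qed

lemma (in prob_space) disjoint_family_equal_prob_eq_0:
  fixes E :: "nat \<Rightarrow> 'a set"
  assumes "disjoint_family E" and "\<And>n. E n \<in> events" and "\<And>n. prob (E n) = q"
  shows "q = 0"
proof (rule ccontr)
  assume "q \<noteq> 0"
  then have "q > 0"
    using assms(3)[of 0] measure_nonneg[of M "E 0"] by linarith
  then obtain N :: nat where "1 / q < N"
    using reals_Archimedean2 by blast
  have "prob (\<Union>n<N. E n) = (\<Sum>n<N. prob (E n))"
    using assms(1,2) by (intro finite_measure_finite_Union) (auto simp: disjoint_family_on_def)
  also have "\<dots> = real N * q"
    using assms(3) by simp
  moreover have "prob (\<Union>n<N. E n) \<le> 1"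
    by (rule prob_le_1)
  ultimately have "real N * q \<le> 1"
    by simp
  then show False
    using \<open>1 / q < N\<close> \<open>q > 0\<close> by (simp add: field_simps)
qed

section \<open>Local fields\<close>

locale local_field_abs =
  fixes absK :: "'k::{field,metric_space} \<Rightarrow> real"
  assumes local_field: "local_field absK"
begin

lemma nonarch_abs_absK: "nonarch_abs absK"
  using local_field unfolding local_field_def by blast

lemma absK_nonneg [simp]: "absK x \<ge> 0"
  and absK_eq_0_iff [simp]: "absK x = 0 \<longleftrightarrow> x = 0"
  and absK_mult: "absK (x * y) = absK x * absK y"
  and absK_add_le_max: "absK (x + y) \<le> max (absK x) (absK y)"
  using nonarch_abs_absK unfolding nonarch_abs_def by blast+

lemma dist_absK: "dist x y = absK (x - y)"
  using local_field unfolding local_field_def by blast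

lemma absK_0 [simp]: "absK 0 = 0"
  by simp

lemma absK_pos: "x \<noteq> 0 \<Longrightarrow> absK x > 0"
  using absK_nonneg[of x] absK_eq_0_iff[of x] by linarith

lemma absK_1 [simp]: "absK 1 = 1"
  using absK_mult[of 1 1] absK_pos[of 1] by simp

lemma absK_minus [simp]: "absK (- x) = absK x"
proof -
  have "absK (-1) * absK (-1) = 1"
    using absK_mult[of "-1" "-1"] by simp
  then have "(absK (-1))\<^sup>2 = 1"
    by (simp add: power2_eq_square)
  then have "absK (-1) = 1"
    using absK_nonneg[of "-1"] unfolding power2_eq_1_iff by linarith
  then show ?thesis
    using absK_mult[of "-1" x] by simp
qed

lemma absK_minus_commute: "absK (x - y) = absK (y - x)"
  by (metis absK_minus minus_diff_eq)

lemma absK_diff_le_max: "absK (x - y) \<le> max (absK x) (absK y)"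
  using absK_add_le_max[of x "- y"] by simp

lemma absK_inverse: "absK (inverse x) = inverse (absK x)"
proof (cases "x = 0")
  case False
  then have "absK x * absK (inverse x) = 1"
    using absK_mult[of x "inverse x"] by simp
  then show ?thesis
    by (metis inverse_unique)
qed simp

lemma absK_divide: "absK (x / y) = absK x / absK y"
  by (simp add: divide_inverse absK_mult absK_inverse)

lemma absK_power: "absK (x ^ n) = absK x ^ n"
  by (induction n) (simp_all add: absK_mult)

lemma absK_add_eq_right: "absK x < absK y \<Longrightarrow> absK (x + y) = absK y"
  using absK_add_le_max[of x y] absK_diff_le_max[of "x + y" x] by auto

lemma ex_absK_less: "e > 0 \<Longrightarrow> \<exists>t. t \<noteq> 0 \<and> absK t < e"
proof -
  assume "e > 0"
  obtain x :: 'k where "x islimpt UNIV"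
    using local_field unfolding local_field_def by blast
  then obtain y where "y \<noteq> x" "dist y x < e"
    using \<open>e > 0\<close> unfolding islimpt_approachable by blast
  then show ?thesis
    by (intro exI[of _ "y - x"]) (simp add: dist_absK)
qed

lemma ex_absK_greater: "\<exists>s. s \<noteq> 0 \<and> absK s > R"
proof -
  obtain t where t: "t \<noteq> 0" "absK t < 1"
    using ex_absK_less[of 1] by auto
  then have "1 < inverse (absK t)"
    using absK_pos[of t] by (simp add: one_less_inverse)
  then obtain n where "R < inverse (absK t) ^ n"
    using real_arch_pow by blast
  then show ?thesis
    using t by (intro exI[of _ "inverse t ^ n"]) (simp add: absK_power absK_inverse)
qed

lemma ex_compact_cball_0: "\<exists>r>0. compact (cball (0::'k) r)"
proof -
  have "locally compact (UNIV::'k set)"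
    using local_field unfolding local_field_def by blast
  then obtain U V where UV: "openin (top_of_set UNIV) U" "compact V" "(0::'k) \<in> U" "U \<subseteq> V"
    by (rule locallyE[of _ _ UNIV 0]) auto
  then obtain r where r: "r > 0" "ball 0 r \<subseteq> U"
    using open_contains_ball[of U] by auto
  then have "cball (0::'k) (r/2) \<subseteq> V"
    using UV(4) by (auto simp: subset_eq)
  then have "compact (V \<inter> cball 0 (r/2))"
    using UV(2) by (simp add: compact_Int_closed)
  then show ?thesis
    using r(1) \<open>cball 0 (r/2) \<subseteq> V\<close> by (intro exI[of _ "r/2"]) (simp add: Int_absorb1)
qed

text \<open>Every closed ball is the image of the compact ball around 0 under an affine map
  \<open>z \<mapsto> u + s z\<close> with \<open>|s|\<close> large.\<close>
lemma compact_cball_K: "compact (cball (u::'k) R)"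
proof -
  obtain r where r: "r > 0" "compact (cball (0::'k) r)"
    using ex_compact_cball_0 by blast
  obtain s where s: "s \<noteq> 0" "absK s > R / r"
    using ex_absK_greater by blast
  have "continuous_on UNIV (\<lambda>z::'k. u + s * z)"
    by (rule lipschitz_on_continuous_on[of "absK s"])
      (simp add: lipschitz_on_def dist_absK absK_mult right_diff_distrib[symmetric])
  then have "compact ((\<lambda>z. u + s * z) ` cball 0 r)"
    using r(2) by (meson compact_continuous_image continuous_on_subset subset_UNIV)
  moreover have "cball u R \<subseteq> (\<lambda>z. u + s * z) ` cball 0 r"
  proof
    fix w assume "w \<in> cball u R"
    then have "absK (w - u) \<le> R"
      by (simp add: dist_absK absK_minus_commute)
    moreover have "R < r * absK s"
      using s r(1) by (simp add: field_simps)
    ultimately have "absK ((w - u) / s) \<le> r"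
      using absK_pos[OF s(1)] by (simp add: absK_divide field_simps)
    then have "(w - u) / s \<in> cball 0 r"
      by (simp add: dist_absK)
    moreover have "w = u + s * ((w - u) / s)"
      using s(1) by simp
    ultimately show "w \<in> (\<lambda>z. u + s * z) ` cball 0 r"
      by blast
  qed
  ultimately show ?thesis
    by (metis compact_Int_closed inf.absorb_iff2 closed_cball)
qed

text \<open>The annulus is compact and the absolute value is locally constant on it.\<close>
lemma finite_absK_annulus:
  assumes "t \<noteq> 0"
  shows "finite (absK ` {l. absK t \<le> absK l \<and> absK l \<le> 1})"
proof -
  define Ann where "Ann = {l. absK t \<le> absK l \<and> absK l \<le> 1}"
  have "Ann = cball (0::'k) 1 - ball 0 (absK t)"
    unfolding Ann_def by (auto simp: dist_absK)
  then have "compact Ann"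
    by (simp add: compact_diff compact_cball_K)
  moreover have "Ann \<subseteq> (\<Union>l\<in>Ann. ball l (absK l))"
  proof
    fix l assume "l \<in> Ann"
    then have "absK l > 0"
      unfolding Ann_def using absK_pos[OF assms] by auto
    then have "l \<in> ball l (absK l)"
      by simp
    then show "l \<in> (\<Union>l\<in>Ann. ball l (absK l))"
      using \<open>l \<in> Ann\<close> by blast
  qed
  ultimately obtain F where F: "finite F" "Ann \<subseteq> (\<Union>l\<in>F. ball l (absK l))"
    by (meson compactE_image open_ball)
  have locally_const: "absK m = absK l" if "m \<in> ball l (absK l)" for m l
    using that absK_add_eq_right[of "m - l" l] by (simp add: dist_absK absK_minus_commute)
  have "absK ` Ann \<subseteq> absK ` F"
  proof
    fix v assume "v \<in> absK ` Ann"
    then obtain m where "m \<in> Ann" "v = absK m"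
      by blast
    moreover obtain l where "l \<in> F" "m \<in> ball l (absK l)"
      using F(2) \<open>m \<in> Ann\<close> by blast
    ultimately show "v \<in> absK ` F"
      using locally_const by blast
  qed
  then show ?thesis
    unfolding Ann_def by (rule finite_subset) (simp add: F(1))
qed

lemma ex_uniformizer: "\<exists>\<pi>. \<pi> \<noteq> 0 \<and> absK \<pi> < 1 \<and> (\<forall>l. absK l < 1 \<longrightarrow> absK l \<le> absK \<pi>)"
proof -
  obtain t where t: "t \<noteq> 0" "absK t < 1"
    using ex_absK_less[of 1] by auto
  define V where "V = {v \<in> absK ` {l. absK t \<le> absK l \<and> absK l \<le> 1}. v < 1}"
  have "finite V"
    by (rule finite_subset[OF _ finite_absK_annulus[OF t(1)]]) (auto simp: V_def)
  moreover have tV: "absK t \<in> V"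
    unfolding V_def using t by auto
  ultimately have "Max V \<in> V"
    using Max_in by blast
  then obtain \<pi> where \<pi>: "absK t \<le> absK \<pi>" "absK \<pi> = Max V" "Max V < 1"
    unfolding V_def by auto
  show ?thesis
  proof (intro exI[of _ \<pi>] conjI allI impI)
    show "\<pi> \<noteq> 0"
      using \<pi>(1) absK_pos[OF t(1)] by auto
    show "absK \<pi> < 1"
      using \<pi> by simp
    fix l assume l: "absK l < 1"
    show "absK l \<le> absK \<pi>"
    proof (cases "absK t \<le> absK l")
      case True
      then have "absK l \<in> V"
        unfolding V_def using l by auto
      then show ?thesis
        using \<pi>(2) \<open>finite V\<close> by simp
    next
      case False
      then show ?thesis
        using Max_ge[OF \<open>finite V\<close> tV] \<pi>(2) by linarith
    qed
  qed
qed

text \<open>The hypothesis says that the closed balls meet pairwise. By compactness of balls it suffices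
  to treat finitely many of them, and then the smallest one lies inside all others.\<close>
lemma spherically_complete:
  fixes c :: "'i \<Rightarrow> 'k" and r :: "'i \<Rightarrow> real"
  assumes "i0 \<in> I" and meet: "\<And>i j. i \<in> I \<Longrightarrow> j \<in> I \<Longrightarrow> absK (c i - c j) \<le> max (r i) (r j)"
  shows "\<exists>d. \<forall>i\<in>I. absK (d - c i) \<le> r i"
proof -
  have "cball (c i0) (r i0) \<inter> \<Inter> ((\<lambda>i. cball (c i) (r i)) ` I) \<noteq> {}"
  proof (rule compact_imp_fip_image[OF compact_cball_K])
    fix J' assume J': "finite J'" "J' \<subseteq> I"
    define J where "J = insert i0 J'"
    have J: "finite J" "J \<noteq> {}" "J \<subseteq> I"
      using J' \<open>i0 \<in> I\<close> unfolding J_def by auto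
    define j where "j = arg_min_on r J"
    have j: "j \<in> J" "\<And>i. i \<in> J \<Longrightarrow> r j \<le> r i"
      using arg_min_if_finite[OF J(1,2), of r] unfolding j_def by (auto simp: not_less)
    have "c j \<in> cball (c i) (r i)" if "i \<in> J" for i
      using meet[of i j] j that J(3) by (auto simp: dist_absK)
    then show "cball (c i0) (r i0) \<inter> \<Inter> ((\<lambda>i. cball (c i) (r i)) ` J') \<noteq> {}"
      unfolding J_def by blast
  qed auto
  then obtain d where "\<forall>i\<in>I. d \<in> cball (c i) (r i)"
    by blast
  then show ?thesis
    by (auto simp: dist_absK absK_minus_commute)
qed

lemma orthonormal2_shear:
  assumes "absK a \<le> 1"
  shows "orthonormal2 absK (1, 0) (a, 1)"
proof -
  have "max (absK (\<alpha> + \<beta> * a)) (absK \<beta>) = max (absK \<alpha>) (absK \<beta>)" for \<alpha> \<beta>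
  proof -
    have "absK (\<beta> * a) \<le> absK \<beta>"
      using assms by (simp add: absK_mult mult_left_le)
    then have "absK (\<alpha> + \<beta> * a) \<le> max (absK \<alpha>) (absK \<beta>)"
      and "absK \<alpha> \<le> max (absK (\<alpha> + \<beta> * a)) (absK \<beta>)"
      using absK_add_le_max[of \<alpha> "\<beta> * a"] absK_diff_le_max[of "\<alpha> + \<beta> * a" "\<beta> * a"] by auto
    then show ?thesis
      by linarith
  qed
  then show ?thesis
    unfolding orthonormal2_def using assms by simp
qed

end

section \<open>Ultrametric Hahn-Banach theorem and separation\<close>

locale ultrametric_normed_space = local_field_abs absK
  for absK :: "'k::{field,metric_space} \<Rightarrow> real" +
  fixes smul :: "'k \<Rightarrow> 'e::{ab_group_add,metric_space} \<Rightarrow> 'e"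
    and nrm :: "'e \<Rightarrow> real"
  assumes normed_space: "K_normed_space absK smul nrm"
begin

sublocale vector_space smul
  using normed_space unfolding K_normed_space_def by blast

lemma nrm_nonneg [simp]: "nrm x \<ge> 0"
  and nrm_eq_0_iff [simp]: "nrm x = 0 \<longleftrightarrow> x = 0"
  and nrm_smul: "nrm (smul a x) = absK a * nrm x"
  and nrm_add_le_max: "nrm (x + y) \<le> max (nrm x) (nrm y)"
  and dist_nrm: "dist x y = nrm (x - y)"
  using normed_space unfolding K_normed_space_def by blast+

lemma nrm_0 [simp]: "nrm 0 = 0"
  by simp

lemma nrm_smul_inverse: "nrm (smul (inverse l) y) = nrm y / absK l"
  by (simp add: nrm_smul absK_inverse divide_inverse mult.commute)

lemma smul_minus_one: "smul (-1) x = - x"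
  by (metis scale_minus_left scale_one)

lemma nrm_minus [simp]: "nrm (- x) = nrm x"
  using nrm_smul[of "-1" x] by (simp add: smul_minus_one)

lemma nrm_minus_commute: "nrm (x - y) = nrm (y - x)"
  by (metis nrm_minus minus_diff_eq)

lemma nrm_diff_le_max: "nrm (x - z) \<le> max (nrm (x - y)) (nrm (y - z))"
  using nrm_add_le_max[of "x - y" "y - z"] by simp

lemma dist_le_max: "dist (x::'e) z \<le> max (dist x y) (dist y z)"
  unfolding dist_nrm by (rule nrm_diff_le_max)

lemma ball_eq_if_dist_less:
  assumes "dist (x::'e) y < r"
  shows "ball x r = ball y r"
proof -
  have "ball u r \<subseteq> ball v r" if "dist v u < r" for u v :: 'e
  proof
    fix z assume "z \<in> ball u r"
    then show "z \<in> ball v r"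
      using that dist_le_max[of v z u] by simp
  qed
  then show ?thesis
    using assms by (metis dist_commute subset_antisym)
qed

lemma dist_smul: "dist (smul a x) (smul a y) = absK a * dist x y"
  by (simp add: dist_nrm nrm_smul scale_right_diff_distrib[symmetric])

lemma continuous_on_smul: "continuous_on UNIV (smul a)"
  by (rule lipschitz_on_continuous_on[of "absK a"]) (simp add: lipschitz_on_def dist_smul)

lemma continuous_on_add_left: "continuous_on UNIV (\<lambda>y::'e. x + y)"
  by (rule lipschitz_on_continuous_on[of 1]) (simp add: lipschitz_on_def dist_nrm)

lemma open_translate_vimage: "open U \<Longrightarrow> open {y::'e. x + y \<in> U}"
  using continuous_on_open_vimage[of UNIV "\<lambda>y. x + y"] continuous_on_add_left[of x]
  by (simp add: vimage_def)

definition K_seminorm :: "('e \<Rightarrow> real) \<Rightarrow> bool" where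
  "K_seminorm p \<longleftrightarrow> (\<forall>y z. p (y + z) \<le> max (p y) (p z)) \<and> (\<forall>a y. p (smul a y) = absK a * p y)"

lemma K_seminormD:
  assumes "K_seminorm p"
  shows "p (y + z) \<le> max (p y) (p z)" and "p (smul a y) = absK a * p y" and "p (- y) = p y"
proof -
  show "p (y + z) \<le> max (p y) (p z)" and homogeneous: "p (smul a y) = absK a * p y" for a
    using assms unfolding K_seminorm_def by blast+
  show "p (- y) = p y"
    using homogeneous[of "-1"] by (simp add: smul_minus_one)
qed

text \<open>Partial linear functionals dominated by \<open>p\<close>, represented by their graphs so that
  Zorn's lemma applies to them directly.\<close>
definition dominated_linear_graph :: "('e \<Rightarrow> real) \<Rightarrow> ('e \<times> 'k) set \<Rightarrow> bool" where
  "dominated_linear_graph p H \<longleftrightarrow>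
     (\<forall>y a b. (y, a) \<in> H \<longrightarrow> (y, b) \<in> H \<longrightarrow> a = b) \<and>
     (\<forall>y a z b. (y, a) \<in> H \<longrightarrow> (z, b) \<in> H \<longrightarrow> (y + z, a + b) \<in> H) \<and>
     (\<forall>y a l. (y, a) \<in> H \<longrightarrow> (smul l y, l * a) \<in> H) \<and>
     (\<forall>y a. (y, a) \<in> H \<longrightarrow> absK a \<le> p y)"

context
  fixes p :: "'e \<Rightarrow> real" and H :: "('e \<times> 'k) set"
  assumes H: "dominated_linear_graph p H"
begin

lemma graph_unique: "(y, a) \<in> H \<Longrightarrow> (y, b) \<in> H \<Longrightarrow> a = b"
  and graph_add: "(y, a) \<in> H \<Longrightarrow> (z, b) \<in> H \<Longrightarrow> (y + z, a + b) \<in> H"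
  and graph_smul: "(y, a) \<in> H \<Longrightarrow> (smul l y, l * a) \<in> H"
  and graph_dominated: "(y, a) \<in> H \<Longrightarrow> absK a \<le> p y"
  using H unfolding dominated_linear_graph_def by blast+

lemma graph_diff: "(y, a) \<in> H \<Longrightarrow> (z, b) \<in> H \<Longrightarrow> (y - z, a - b) \<in> H"
  using graph_add[of y a "- z" "- b"] graph_smul[of z b "-1"] by (simp add: smul_minus_one)

lemma graph_zero: "H \<noteq> {} \<Longrightarrow> (0, 0) \<in> H"
proof -
  assume "H \<noteq> {}"
  then obtain y a where "(y, a) \<in> H"
    by auto
  then show "(0, 0) \<in> H"
    using graph_smul[of y a 0] by simp
qed

end

lemma dominated_linear_graph_Union:
  assumes chain: "C \<in> chains {H. dominated_linear_graph p H}"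
  shows "dominated_linear_graph p (\<Union>C)"
proof -
  have graphs: "dominated_linear_graph p H" if "H \<in> C" for H
    using chain that unfolding chains_def by blast
  have common: "\<exists>H\<in>C. u \<in> H \<and> v \<in> H" if uv: "u \<in> \<Union>C" "v \<in> \<Union>C" for u v
  proof -
    obtain H1 H2 where "H1 \<in> C" "H2 \<in> C" "u \<in> H1" "v \<in> H2"
      using uv by blast
    then show ?thesis
      using chainsD[OF chain, of H1 H2] by blast
  qed
  show ?thesis
    unfolding dominated_linear_graph_def
  proof (intro conjI allI impI)
    fix y a b assume "(y, a) \<in> \<Union>C" "(y, b) \<in> \<Union>C"
    then obtain H where "H \<in> C" "(y, a) \<in> H" "(y, b) \<in> H"
      using common by blast
    then show "a = b"
      using graph_unique[OF graphs] by blast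
  next
    fix y a z b assume "(y, a) \<in> \<Union>C" "(z, b) \<in> \<Union>C"
    then obtain H where "H \<in> C" "(y, a) \<in> H" "(z, b) \<in> H"
      using common by blast
    then show "(y + z, a + b) \<in> \<Union>C"
      using graph_add[OF graphs] by blast
  next
    fix y a l assume "(y, a) \<in> \<Union>C"
    then obtain H where "H \<in> C" "(y, a) \<in> H"
      by blast
    then show "(smul l y, l * a) \<in> \<Union>C"
      using graph_smul[OF graphs] by blast
  next
    fix y a assume "(y, a) \<in> \<Union>C"
    then obtain H where "H \<in> C" "(y, a) \<in> H"
      by blast
    then show "absK a \<le> p y"
      using graph_dominated[OF graphs] by blast
  qed
qed

text \<open>The admissible values \<open>d\<close> at a new vector \<open>y\<close> form the intersection of the balls
  \<open>cball (- b) (p (z + y))\<close> over \<open>(z, b) \<in> M\<close>, which meet pairwise; spherical completeness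
  replaces the order argument of the real Hahn-Banach theorem.\<close>
lemma ex_dominated_value:
  assumes p: "K_seminorm p" and M: "dominated_linear_graph p M" "M \<noteq> {}"
  shows "\<exists>d. \<forall>(z, b)\<in>M. absK (b + d) \<le> p (z + y)"
proof -
  obtain i0 where "i0 \<in> M"
    using M(2) by blast
  have "\<exists>d. \<forall>i\<in>M. absK (d - (\<lambda>(z, b). - b) i) \<le> (\<lambda>(z, b). p (z + y)) i"
  proof (rule spherically_complete[OF \<open>i0 \<in> M\<close>])
    fix i j assume "i \<in> M" "j \<in> M"
    moreover obtain z1 b1 z2 b2 where ij: "i = (z1, b1)" "j = (z2, b2)"
      by fastforce
    ultimately have "absK (b1 - b2) \<le> p (z1 - z2)"
      using graph_dominated[OF M(1) graph_diff[OF M(1)]] by blast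
    also have "p (z1 - z2) = p ((z1 + y) + - (z2 + y))"
      by (simp add: algebra_simps)
    also have "\<dots> \<le> max (p (z1 + y)) (p (z2 + y))"
      using K_seminormD[OF p] by metis
    finally show "absK ((\<lambda>(z, b). - b) i - (\<lambda>(z, b). - b) j)
        \<le> max ((\<lambda>(z, b). p (z + y)) i) ((\<lambda>(z, b). p (z + y)) j)"
      using ij by (simp add: absK_minus_commute)
  qed
  then obtain d where "\<And>z b. (z, b) \<in> M \<Longrightarrow> absK (d - - b) \<le> p (z + y)"
    by fastforce
  then show ?thesis
    by (intro exI[of _ d]) (auto simp: add.commute)
qed

lemma graph_adjoin_coefficient_unique:
  assumes M: "dominated_linear_graph p M" and y: "\<And>a. (y, a) \<notin> M"
    and "(z1, b1) \<in> M" "(z2, b2) \<in> M" "z1 + smul l1 y = z2 + smul l2 y"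
  shows "l1 = l2"
proof (rule ccontr)
  assume "l1 \<noteq> l2"
  have "smul (l2 - l1) y = z1 - z2"
    using assms(5) by (simp add: scale_left_diff_distrib algebra_simps)
  then have "smul (inverse (l2 - l1)) (z1 - z2) = y"
    using \<open>l1 \<noteq> l2\<close> by (metis scale_scale right_minus_eq left_inverse scale_one)
  moreover have "(smul (inverse (l2 - l1)) (z1 - z2), inverse (l2 - l1) * (b1 - b2)) \<in> M"
    using graph_smul[OF M graph_diff[OF M assms(3,4)]] .
  ultimately show False
    using y by metis
qed

lemma graph_adjoin_dominated:
  assumes p: "K_seminorm p" and M: "dominated_linear_graph p M" "(z, b) \<in> M"
    and d: "\<And>z b. (z, b) \<in> M \<Longrightarrow> absK (b + d) \<le> p (z + y)"
  shows "absK (b + l * d) \<le> p (z + smul l y)"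
proof (cases "l = 0")
  case True
  then show ?thesis
    using graph_dominated[OF M] by simp
next
  case False
  have "absK (inverse l * b + d) \<le> p (smul (inverse l) z + y)"
    using d graph_smul[OF M] by blast
  then have "absK l * absK (inverse l * b + d) \<le> absK l * p (smul (inverse l) z + y)"
    by (simp add: mult_left_mono)
  moreover have "absK l * absK (inverse l * b + d) = absK (b + l * d)"
    using False by (simp add: absK_mult[symmetric] algebra_simps)
  moreover have "absK l * p (smul (inverse l) z + y) = p (z + smul l y)"
    using False K_seminormD(2)[OF p, symmetric] by (simp add: scale_right_distrib)
  ultimately show ?thesis
    by simp
qed

lemma dominated_linear_graph_adjoin:
  assumes p: "K_seminorm p" and M: "dominated_linear_graph p M"
    and y: "\<And>a. (y, a) \<notin> M" and d: "\<And>z b. (z, b) \<in> M \<Longrightarrow> absK (b + d) \<le> p (z + y)"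
  shows "dominated_linear_graph p {(z + smul l y, b + l * d) | z b l. (z, b) \<in> M}"
    (is "dominated_linear_graph p ?M'")
  unfolding dominated_linear_graph_def
proof (intro conjI allI impI)
  fix w a1 a2 assume "(w, a1) \<in> ?M'" "(w, a2) \<in> ?M'"
  then obtain z1 b1 l1 z2 b2 l2 where
    w: "w = z1 + smul l1 y" "a1 = b1 + l1 * d" "(z1, b1) \<in> M"
       "w = z2 + smul l2 y" "a2 = b2 + l2 * d" "(z2, b2) \<in> M"
    by blast
  then have "l1 = l2" "z1 = z2"
    using graph_adjoin_coefficient_unique[OF M y w(3,6), of l1 l2] by simp_all
  then show "a1 = a2"
    using w graph_unique[OF M] by blast
next
  fix w1 a1 w2 a2 assume "(w1, a1) \<in> ?M'" "(w2, a2) \<in> ?M'"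
  then obtain z1 b1 l1 z2 b2 l2 where
    w: "w1 = z1 + smul l1 y" "a1 = b1 + l1 * d" "(z1, b1) \<in> M"
       "w2 = z2 + smul l2 y" "a2 = b2 + l2 * d" "(z2, b2) \<in> M"
    by blast
  then have "w1 + w2 = (z1 + z2) + smul (l1 + l2) y" "a1 + a2 = (b1 + b2) + (l1 + l2) * d"
    by (simp_all add: scale_left_distrib algebra_simps)
  then show "(w1 + w2, a1 + a2) \<in> ?M'"
    using graph_add[OF M w(3,6)] by blast
next
  fix w a m assume "(w, a) \<in> ?M'"
  then obtain z b l where w: "w = z + smul l y" "a = b + l * d" "(z, b) \<in> M"
    by blast
  then have "smul m w = smul m z + smul (m * l) y" "m * a = m * b + (m * l) * d"
    by (simp_all add: scale_right_distrib algebra_simps)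
  then show "(smul m w, m * a) \<in> ?M'"
    using graph_smul[OF M w(3)] by blast
next
  fix w a assume "(w, a) \<in> ?M'"
  then obtain z b l where "w = z + smul l y" "a = b + l * d" "(z, b) \<in> M"
    by blast
  then show "absK a \<le> p w"
    using graph_adjoin_dominated[OF p M _ d] by simp
qed

lemma dominated_linear_graph_zero:
  assumes p: "K_seminorm p"
  shows "dominated_linear_graph p {(0, 0)}"
proof -
  have "p 0 = 0"
    using K_seminormD(2)[OF p, of 0 0] by simp
  then show ?thesis
    unfolding dominated_linear_graph_def by simp
qed

lemma ex_dominated_linear_graph_through:
  assumes p: "K_seminorm p" and c: "absK c \<le> p x0"
  obtains H where "dominated_linear_graph p H" "(x0, c) \<in> H"
proof (cases "x0 = 0")
  case True
  then have "absK c \<le> 0"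
    using c K_seminormD(2)[OF p, of 0 0] by simp
  then have "c = 0"
    using absK_nonneg[of c] by simp
  then show thesis
    using that dominated_linear_graph_zero[OF p] True by blast
next
  case False
  let ?H = "{(z + smul l x0, b + l * c) | z b l. (z, b) \<in> {(0, 0)}}"
  have "dominated_linear_graph p ?H"
    using dominated_linear_graph_adjoin[OF p dominated_linear_graph_zero[OF p], of x0 c] False c
    by simp
  moreover have "(x0, c) = (0 + smul 1 x0, 0 + 1 * c)"
    by simp
  then have "(x0, c) \<in> ?H"
    by blast
  ultimately show thesis
    by (rule that)
qed

lemma dominated_linear_graph_extend:
  assumes p: "K_seminorm p" and M: "dominated_linear_graph p M" "M \<noteq> {}"
  obtains M' where "dominated_linear_graph p M'" "M \<subseteq> M'" "\<exists>a. (y, a) \<in> M'"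
proof (cases "\<exists>a. (y, a) \<in> M")
  case True
  then show thesis
    using that[OF M(1) subset_refl] by blast
next
  case False
  then obtain d where d: "\<And>z b. (z, b) \<in> M \<Longrightarrow> absK (b + d) \<le> p (z + y)"
    using ex_dominated_value[OF p M] by blast
  define M' where "M' = {(z + smul l y, b + l * d) | z b l. (z, b) \<in> M}"
  have "dominated_linear_graph p M'"
    unfolding M'_def using dominated_linear_graph_adjoin[OF p M(1) _ d] False by blast
  moreover have "M \<subseteq> M'"
  proof
    fix u assume "u \<in> M"
    moreover obtain w a where "u = (w, a)"
      by fastforce
    moreover have "(w, a) = (w + smul 0 y, a + 0 * d)"
      by simp
    ultimately show "u \<in> M'"
      unfolding M'_def by blast
  qed
  moreover have "(y, d) \<in> M'"
  proof -
    have "(y, d) = (0 + smul 1 y, 0 + 1 * d)"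
      by simp
    then show ?thesis
      unfolding M'_def using graph_zero[OF M] by blast
  qed
  ultimately show thesis
    using that[of M'] by blast
qed

lemma ex_maximal_dominated_linear_graph:
  assumes p: "K_seminorm p" and c: "absK c \<le> p x0"
  obtains M where "dominated_linear_graph p M" "(x0, c) \<in> M"
    "\<And>H. dominated_linear_graph p H \<Longrightarrow> M \<subseteq> H \<Longrightarrow> H = M"
proof -
  let ?G = "{H. dominated_linear_graph p H \<and> (x0, c) \<in> H}"
  have "\<exists>M\<in>?G. \<forall>H\<in>?G. M \<subseteq> H \<longrightarrow> H = M"
  proof (rule Zorn_Lemma2, intro ballI)
    fix C assume C: "C \<in> chains ?G"
    show "\<exists>U\<in>?G. \<forall>H\<in>C. H \<subseteq> U"
    proof (cases "C = {}")
      case True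
      obtain H where "dominated_linear_graph p H" "(x0, c) \<in> H"
        using ex_dominated_linear_graph_through[OF p c] by blast
      then show ?thesis
        using True by blast
    next
      case False
      have "C \<in> chains {H. dominated_linear_graph p H}"
        using C by (auto simp: chains_def)
      then have "\<Union>C \<in> ?G"
        using dominated_linear_graph_Union False C by (auto simp: chains_def)
      then show ?thesis
        by blast
    qed
  qed
  then obtain M where M: "dominated_linear_graph p M" "(x0, c) \<in> M"
    and maximal: "\<forall>H\<in>?G. M \<subseteq> H \<longrightarrow> H = M"
    by blast
  show thesis
  proof (rule that[OF M])
    fix H assume "dominated_linear_graph p H" "M \<subseteq> H"
    then show "H = M"
      using maximal M(2) by blast
  qed
qed

theorem ultrametric_Hahn_Banach:
  assumes p: "K_seminorm p" and c: "absK c \<le> p x0"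
  obtains T where "\<And>y z. T (y + z) = T y + T z" "\<And>a y. T (smul a y) = a * T y"
    "T x0 = c" "\<And>y. absK (T y) \<le> p y"
proof -
  obtain M where M: "dominated_linear_graph p M" "(x0, c) \<in> M"
    and maximal: "\<And>H. dominated_linear_graph p H \<Longrightarrow> M \<subseteq> H \<Longrightarrow> H = M"
    using ex_maximal_dominated_linear_graph[OF p c] by blast
  have "M \<noteq> {}"
    using M(2) by blast
  have total: "\<exists>a. (y, a) \<in> M" for y
  proof -
    obtain M' where "dominated_linear_graph p M'" "M \<subseteq> M'" "\<exists>a. (y, a) \<in> M'"
      using dominated_linear_graph_extend[OF p M(1) \<open>M \<noteq> {}\<close>] by blast
    then show ?thesis
      using maximal by blast
  qed
  define T where "T y = (THE a. (y, a) \<in> M)" for y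
  have graph_T: "(y, T y) \<in> M" for y
  proof -
    have "\<exists>!a. (y, a) \<in> M"
      using total graph_unique[OF M(1)] by blast
    then show ?thesis
      unfolding T_def by (rule theI')
  qed
  then have T_eq: "T y = a" if "(y, a) \<in> M" for y a
    using that graph_unique[OF M(1)] by blast
  show thesis
  proof
    show "T (y + z) = T y + T z" for y z
      using T_eq graph_add[OF M(1) graph_T graph_T] by blast
    show "T (smul a y) = a * T y" for a y
      using T_eq graph_smul[OF M(1) graph_T] by blast
    show "T x0 = c"
      using T_eq M(2) by blast
    show "absK (T y) \<le> p y" for y
      using graph_dominated[OF M(1) graph_T] .
  qed
qed

lemma mem_subspace_if_shears_mem:
  assumes M: "subspace M" and "a \<noteq> b" "smul a x + y \<in> M" "smul b x + y \<in> M"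
  shows "x \<in> M"
proof -
  have "smul (a - b) x \<in> M"
    using subspace_diff[OF M assms(3,4)] by (simp add: scale_left_diff_distrib)
  then have "smul (inverse (a - b)) (smul (a - b) x) \<in> M"
    using subspace_scale[OF M] by blast
  then show ?thesis
    using \<open>a \<noteq> b\<close> by simp
qed

lemma D_submoduleD:
  assumes "D_submodule absK smul A"
  shows "0 \<in> A" and "x \<in> A \<Longrightarrow> y \<in> A \<Longrightarrow> x + y \<in> A"
    and "absK a \<le> 1 \<Longrightarrow> x \<in> A \<Longrightarrow> smul a x \<in> A"
  using assms unfolding D_submodule_def by blast+

definition K_gauge :: "'e set \<Rightarrow> 'e \<Rightarrow> real" where
  "K_gauge A y = Inf {absK l | l. l \<noteq> 0 \<and> (\<exists>a\<in>A. y = smul l a)}"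

context
  fixes A :: "'e set" and r :: real
  assumes A: "D_submodule absK smul A" and r: "r > 0" and ball_A: "\<And>b. nrm b < r \<Longrightarrow> b \<in> A"
begin

lemma K_gauge_le: "l \<noteq> 0 \<Longrightarrow> a \<in> A \<Longrightarrow> K_gauge A (smul l a) \<le> absK l"
  unfolding K_gauge_def by (rule cInf_lower) (auto intro: bdd_belowI[of _ 0])

lemma K_gauge_le_if_nrm_less:
  assumes "l \<noteq> 0" "nrm y < r * absK l"
  shows "K_gauge A y \<le> absK l"
proof -
  have "nrm (smul (inverse l) y) < r"
    unfolding nrm_smul_inverse using assms absK_pos[of l] by (simp add: field_simps)
  then have "K_gauge A (smul l (smul (inverse l) y)) \<le> absK l"
    using K_gauge_le[OF assms(1) ball_A] by blast
  then show ?thesis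
    using assms(1) by simp
qed

lemma K_gauge_set_nonempty: "{absK l | l. l \<noteq> 0 \<and> (\<exists>a\<in>A. y = smul l a)} \<noteq> {}"
proof -
  obtain l where l: "l \<noteq> 0" "absK l > nrm y / r"
    using ex_absK_greater by blast
  have "nrm (smul (inverse l) y) < r"
    unfolding nrm_smul_inverse using l absK_pos[OF l(1)] r by (simp add: field_simps)
  moreover have "y = smul l (smul (inverse l) y)"
    using l(1) by simp
  ultimately show ?thesis
    using l(1) ball_A by blast
qed

lemma K_gauge_ge:
  assumes "\<And>l a. l \<noteq> 0 \<Longrightarrow> a \<in> A \<Longrightarrow> y = smul l a \<Longrightarrow> m \<le> absK l"
  shows "m \<le> K_gauge A y"
  unfolding K_gauge_def by (rule cInf_greatest[OF K_gauge_set_nonempty]) (use assms in blast)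

lemma K_gauge_less_imp:
  assumes "K_gauge A y < t"
  obtains l a where "l \<noteq> 0" "a \<in> A" "y = smul l a" "absK l < t"
  using assms K_gauge_ge[of y t] by force

lemma K_gauge_nonneg: "K_gauge A y \<ge> 0"
  by (rule K_gauge_ge) simp

lemma K_gauge_le_1: "y \<in> A \<Longrightarrow> K_gauge A y \<le> 1"
  using K_gauge_le[of 1 y] by simp

lemma K_gauge_0: "K_gauge A 0 = 0"
proof (rule antisym[OF _ K_gauge_nonneg], rule ccontr)
  assume "\<not> K_gauge A 0 \<le> 0"
  then obtain l where "l \<noteq> 0" "absK l < K_gauge A 0"
    using ex_absK_less[of "K_gauge A 0"] by auto
  moreover have "K_gauge A 0 \<le> absK l"
    using K_gauge_le_if_nrm_less[of l 0] absK_pos[of l] r calculation(1) by simp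
  ultimately show False
    by simp
qed

lemma K_gauge_smul_le: "m \<noteq> 0 \<Longrightarrow> K_gauge A (smul m y) \<le> absK m * K_gauge A y"
proof -
  assume "m \<noteq> 0"
  have "K_gauge A (smul m y) / absK m \<le> K_gauge A y"
  proof (rule K_gauge_ge)
    fix l a assume "l \<noteq> 0" "a \<in> A" "y = smul l a"
    then have "K_gauge A (smul m y) \<le> absK m * absK l"
      using K_gauge_le[of "m * l" a] \<open>m \<noteq> 0\<close> by (simp add: absK_mult)
    then show "K_gauge A (smul m y) / absK m \<le> absK l"
      using absK_pos[OF \<open>m \<noteq> 0\<close>] by (simp add: divide_le_eq mult.commute)
  qed
  then show ?thesis
    using absK_pos[OF \<open>m \<noteq> 0\<close>] by (simp add: divide_le_eq mult.commute)
qed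

lemma K_gauge_smul: "K_gauge A (smul m y) = absK m * K_gauge A y"
proof (cases "m = 0")
  case True
  then show ?thesis
    using K_gauge_0 by simp
next
  case False
  have "K_gauge A y \<le> inverse (absK m) * K_gauge A (smul m y)"
    using K_gauge_smul_le[of "inverse m" "smul m y"] False unfolding absK_inverse by simp
  then have "absK m * K_gauge A y \<le> K_gauge A (smul m y)"
    using absK_pos[OF False] by (simp add: absK_inverse field_simps)
  then show ?thesis
    using K_gauge_smul_le[OF False, of y] by linarith
qed

lemma K_gauge_add_le_max: "K_gauge A (y + z) \<le> max (K_gauge A y) (K_gauge A z)"
proof -
  have *: "K_gauge A (smul l1 a1 + smul l2 a2) \<le> absK l2"
    if "absK l1 \<le> absK l2" "l2 \<noteq> 0" "a1 \<in> A" "a2 \<in> A" for l1 l2 a1 a2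
  proof -
    have "absK (l1 / l2) \<le> 1"
      using that(1) absK_pos[OF that(2)] by (simp add: absK_divide)
    then have "smul (l1 / l2) a1 + a2 \<in> A"
      using that(3,4) D_submoduleD[OF A] by blast
    moreover have "smul l1 a1 + smul l2 a2 = smul l2 (smul (l1 / l2) a1 + a2)"
      using that(2) by (simp add: scale_right_distrib)
    ultimately show ?thesis
      using K_gauge_le[OF that(2)] by simp
  qed
  show ?thesis
  proof (rule ccontr)
    assume "\<not> ?thesis"
    then have "K_gauge A y < K_gauge A (y + z)" "K_gauge A z < K_gauge A (y + z)"
      by auto
    then obtain l1 a1 l2 a2 where
      y: "l1 \<noteq> 0" "a1 \<in> A" "y = smul l1 a1" "absK l1 < K_gauge A (y + z)" and
      z: "l2 \<noteq> 0" "a2 \<in> A" "z = smul l2 a2" "absK l2 < K_gauge A (y + z)"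
      by (metis K_gauge_less_imp)
    have "K_gauge A (y + z) \<le> max (absK l1) (absK l2)"
      using *[of l1 l2 a1 a2] *[of l2 l1 a2 a1] y z by (cases "absK l1 \<le> absK l2") (simp_all add: add.commute)
    then show False
      using y(4) z(4) by simp
  qed
qed

lemma K_gauge_outside:
  assumes "x \<notin> A" and \<pi>: "\<pi> \<noteq> 0" "\<And>l. absK l < 1 \<Longrightarrow> absK l \<le> absK \<pi>"
  shows "absK (inverse \<pi>) \<le> K_gauge A x"
proof (rule K_gauge_ge)
  fix l a assume l: "l \<noteq> 0" "a \<in> A" "x = smul l a"
  then have "absK l > 1"
    using assms(1) D_submoduleD(3)[OF A] by force
  then have "inverse (absK l) \<le> absK \<pi>"
    using \<pi>(2)[of "inverse l"] by (simp add: absK_inverse inverse_less_1_iff)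
  then show "absK (inverse \<pi>) \<le> absK l"
    unfolding absK_inverse using absK_pos[OF l(1)] absK_pos[OF \<pi>(1)] by (simp add: field_simps)
qed

lemma dual_space_if_K_gauge_dominated:
  assumes add: "\<And>y z. T (y + z) = T y + T z" and hom: "\<And>a y. T (smul a y) = a * T y"
    and dominated: "\<And>y. absK (T y) \<le> K_gauge A y"
  shows "T \<in> dual_space smul"
proof -
  have "T (y - z) = T y - T z" for y z
    using add[of "y - z" z] by simp
  then have "continuous_on UNIV T"
    unfolding continuous_on_iff
  proof (intro ballI allI impI)
    fix y :: 'e and e :: real assume "e > 0"
    then obtain l where l: "l \<noteq> 0" "absK l < e"
      using ex_absK_less by blast
    have "dist (T y') (T y) < e" if "dist y' y < r * absK l" for y'
      using that dominated[of "y' - y"] K_gauge_le_if_nrm_less[OF l(1), of "y' - y"] l(2)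
      by (simp add: dist_nrm dist_absK \<open>\<And>y z. T (y - z) = T y - T z\<close>)
    moreover have "r * absK l > 0"
      using r absK_pos[OF l(1)] by simp
    ultimately show "\<exists>d>0. \<forall>y'\<in>UNIV. dist y' y < d \<longrightarrow> dist (T y') (T y) < e"
      by blast
  qed
  moreover have "Vector_Spaces.linear smul (*) T"
    using add hom by (unfold_locales) (simp_all add: mult.left_commute)
  ultimately show ?thesis
    unfolding dual_space_def by blast
qed

lemma K_seminorm_K_gauge: "K_seminorm (K_gauge A)"
  unfolding K_seminorm_def using K_gauge_add_le_max K_gauge_smul by blast

end

lemma D_submodule_thickening:
  assumes G: "D_submodule absK smul G" and "r > 0"
  shows "D_submodule absK smul {g + b | g b. g \<in> G \<and> nrm b < r}"
  unfolding D_submodule_def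
proof (intro conjI allI ballI impI)
  show "0 \<in> {g + b | g b. g \<in> G \<and> nrm b < r}"
    using D_submoduleD(1)[OF G] \<open>r > 0\<close> by force
next
  fix u v assume "u \<in> {g + b | g b. g \<in> G \<and> nrm b < r}" "v \<in> {g + b | g b. g \<in> G \<and> nrm b < r}"
  then obtain g b g' b' where "u = g + b" "g \<in> G" "nrm b < r" "v = g' + b'" "g' \<in> G" "nrm b' < r"
    by blast
  moreover have "u + v = (g + g') + (b + b')"
    using calculation by (simp add: algebra_simps)
  ultimately show "u + v \<in> {g + b | g b. g \<in> G \<and> nrm b < r}"
    using D_submoduleD(2)[OF G] nrm_add_le_max[of b b'] by fastforce
next
  fix a u assume "absK a \<le> 1 \<and> u \<in> {g + b | g b. g \<in> G \<and> nrm b < r}"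
  then obtain g b where "absK a \<le> 1" "u = g + b" "g \<in> G" "nrm b < r"
    by blast
  moreover have "nrm (smul a b) \<le> nrm b"
    using \<open>absK a \<le> 1\<close> by (simp add: nrm_smul mult_left_le_one_le)
  ultimately show "smul a u \<in> {g + b | g b. g \<in> G \<and> nrm b < r}"
    using D_submoduleD(3)[OF G] by (force simp: scale_right_distrib)
qed

text \<open>Hahn-Banach applied to the gauge of a thickening \<open>G + ball 0 r\<close> that misses \<open>x\<close>,
  prescribing the value \<open>1 / \<pi>\<close> at \<open>x\<close>; by discreteness of \<open>|K\<^sup>\<times>|\<close> the gauge at \<open>x\<close> is
  at least \<open>|1 / \<pi>|\<close>, so the bound survives.\<close>
theorem separation_closed_D_submodule:
  assumes "closed G" and G: "D_submodule absK smul G" and "x \<notin> G"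
  obtains T where "T \<in> dual_space smul" "\<And>g. g \<in> G \<Longrightarrow> absK (T g) \<le> 1" "absK (T x) > 1"
proof -
  obtain r where r: "r > 0" "ball x r \<subseteq> - G"
    using \<open>closed G\<close> \<open>x \<notin> G\<close> open_contains_ball[of "- G"] by auto
  define A where "A = {g + b | g b. g \<in> G \<and> nrm b < r}"
  have A: "D_submodule absK smul A"
    unfolding A_def using D_submodule_thickening[OF G r(1)] .
  have ball_A: "b \<in> A" if "nrm b < r" for b
    unfolding A_def using that D_submoduleD(1)[OF G] by force
  have G_A: "g \<in> A" if "g \<in> G" for g
    unfolding A_def using that r(1) by force
  have "x \<notin> A"
  proof
    assume "x \<in> A"
    then obtain g b where "x = g + b" "g \<in> G" "nrm b < r"
      unfolding A_def by blast
    then have "g \<in> ball x r"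
      by (simp add: dist_nrm)
    then show False
      using r(2) \<open>g \<in> G\<close> by blast
  qed
  obtain \<pi> where \<pi>: "\<pi> \<noteq> 0" "absK \<pi> < 1" "\<And>l. absK l < 1 \<Longrightarrow> absK l \<le> absK \<pi>"
    using ex_uniformizer by blast
  obtain T where T: "\<And>y z. T (y + z) = T y + T z" "\<And>a y. T (smul a y) = a * T y"
    "T x = inverse \<pi>" "\<And>y. absK (T y) \<le> K_gauge A y"
    using ultrametric_Hahn_Banach[OF K_seminorm_K_gauge[OF A r(1) ball_A]
        K_gauge_outside[OF A r(1) ball_A \<open>x \<notin> A\<close> \<pi>(1,3)]] by blast
  show thesis
  proof
    show "T \<in> dual_space smul"
      using dual_space_if_K_gauge_dominated[OF A r(1) ball_A T(1,2,4)] .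
    show "absK (T g) \<le> 1" if "g \<in> G" for g
      using T(4)[of g] K_gauge_le_1[OF A r(1) ball_A G_A[OF that]] by linarith
    show "absK (T x) > 1"
      using T(3) \<pi>(1,2) absK_pos[OF \<pi>(1)] by (simp add: absK_inverse one_less_inverse)
  qed
qed

lemma ball_Int_ball_cases:
  "ball (a::'e) r \<inter> ball b s = {} \<or> ball a r \<inter> ball b s = ball a r \<or> ball a r \<inter> ball b s = ball b s"
proof (cases "ball a r \<inter> ball b s = {}")
  case False
  then obtain z where z: "dist a z < r" "dist b z < s"
    by auto
  show ?thesis
  proof (cases "r \<le> s")
    case True
    then have "dist b a < s"
      using z dist_le_max[of b a z] by (simp add: dist_commute)
    moreover have "ball a r \<subseteq> ball a s"
      using True by (rule subset_ball)
    ultimately have "ball a r \<subseteq> ball b s"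
      using ball_eq_if_dist_less[of b a s] by simp
    then show ?thesis
      by blast
  next
    case False
    then have "dist a b < r"
      using z dist_le_max[of a b z] by (simp add: dist_commute)
    moreover have "ball b s \<subseteq> ball b r"
      using False by (simp add: subset_ball)
    ultimately have "ball b s \<subseteq> ball a r"
      using ball_eq_if_dist_less[of a b r] by simp
    then show ?thesis
      by blast
  qed
qed simp

end

section \<open>Separable ultrametric spaces\<close>

locale separable_ultrametric_space = ultrametric_normed_space absK smul nrm
  for absK :: "'k::{field,metric_space} \<Rightarrow> real"
    and smul :: "'k \<Rightarrow> 'e::{ab_group_add,metric_space} \<Rightarrow> 'e"
    and nrm :: "'e \<Rightarrow> real" +
  assumes separable: "separable_space TYPE('e)"
begin

definition countable_dense :: "'e set" where
  "countable_dense = (SOME Q. countable Q \<and> closure Q = UNIV)"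

lemma countable_countable_dense: "countable countable_dense"
  and closure_countable_dense: "closure countable_dense = UNIV"
proof -
  have "\<exists>Q::'e set. countable Q \<and> closure Q = UNIV"
    using separable unfolding separable_space_def by blast
  then have "countable countable_dense \<and> closure countable_dense = UNIV"
    unfolding countable_dense_def by (rule someI_ex)
  then show "countable countable_dense" "closure countable_dense = UNIV"
    by auto
qed

lemma countable_dense_approx: "r > 0 \<Longrightarrow> \<exists>d\<in>countable_dense. dist d x < r"
  using closure_countable_dense closure_approachable by blast

text \<open>In an ultrametric space a ball contains every ball of smaller radius around its points,
  so balls with centres in a dense set and rational radii form a basis; together with \<open>{}\<close>
  they are stable under intersection.\<close>
definition rational_balls :: "'e set set" where
  "rational_balls = insert {} ((\<lambda>(d, q). ball d q) ` (countable_dense \<times> {q \<in> \<rat>. q > 0}))"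

lemma countable_rational_balls: "countable rational_balls"
  unfolding rational_balls_def using countable_countable_dense
  by (intro countable_insert countable_image countable_SIGMA)
    (auto intro: countable_subset[OF _ countable_rat])

lemma rational_ball_between:
  fixes x :: 'e
  assumes "open U" "x \<in> U"
  obtains d q where "d \<in> countable_dense" "q \<in> \<rat>" "q > 0" "x \<in> ball d q" "ball d q \<subseteq> U"
proof -
  obtain r where r: "r > 0" "ball x r \<subseteq> U"
    using assms open_contains_ball by blast
  obtain q where q: "q \<in> \<rat>" "0 < q" "q < r"
    using Rats_dense_in_real[OF r(1)] by blast
  obtain d where d: "d \<in> countable_dense" "dist d x < q"
    using countable_dense_approx[OF q(2)] by blast
  have "ball d q = ball x q"
    using ball_eq_if_dist_less[OF d(2)] .
  moreover have "ball x q \<subseteq> U"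
    using subset_ball[of q r x] q(3) r(2) by auto
  ultimately show thesis
    using that[of d q] d q by simp
qed

lemma topological_basis_rational_balls: "topological_basis rational_balls"
proof (rule topological_basisI)
  show "open B" if "B \<in> rational_balls" for B
    using that unfolding rational_balls_def by auto
  fix U :: "'e set" and x :: 'e
  assume "open U" "x \<in> U"
  then obtain d q where "d \<in> countable_dense" "q \<in> \<rat>" "q > 0" "x \<in> ball d q" "ball d q \<subseteq> U"
    by (rule rational_ball_between)
  then show "\<exists>B\<in>rational_balls. x \<in> B \<and> B \<subseteq> U"
    unfolding rational_balls_def by force
qed

lemma borel_eq_sigma_rational_balls: "borel = sigma UNIV rational_balls"
  by (rule borel_eq_countable_basis[OF countable_rational_balls topological_basis_rational_balls])

lemma Int_stable_rational_balls: "Int_stable rational_balls"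
  unfolding Int_stable_def
proof (intro ballI)
  fix A B assume AB: "A \<in> rational_balls" "B \<in> rational_balls"
  show "A \<inter> B \<in> rational_balls"
  proof (cases "A = {} \<or> B = {}")
    case True
    then show ?thesis
      unfolding rational_balls_def by auto
  next
    case False
    then obtain a r b s where "A = ball a r" "B = ball b s"
      using AB unfolding rational_balls_def by auto
    then have "A \<inter> B \<in> {{}, A, B}"
      using ball_Int_ball_cases[of a r b s] by blast
    then show ?thesis
      using AB unfolding rational_balls_def by blast
  qed
qed

lemma sets_borel_eq_sigma_sets_rational_balls: "sets borel = sigma_sets UNIV rational_balls"
  by (subst borel_eq_sigma_rational_balls) (simp add: sets_measure_of)

lemma measure_eqI_balls:
  fixes M N :: "'e measure"
  assumes sets: "sets M = sets borel" "sets N = sets borel" and fin: "emeasure M UNIV \<noteq> \<infinity>"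
    and eq: "\<And>c r. r > 0 \<Longrightarrow> emeasure M (ball c r) = emeasure N (ball c r)"
  shows "M = N"
proof -
  obtain d where "d \<in> countable_dense"
    using countable_dense_approx[of 1 undefined] by auto
  show ?thesis
  proof (rule measure_eqI_generator_eq[OF Int_stable_rational_balls])
    show "rational_balls \<subseteq> Pow UNIV"
      by simp
    show "sets M = sigma_sets UNIV rational_balls" "sets N = sigma_sets UNIV rational_balls"
      using sets sets_borel_eq_sigma_sets_rational_balls by simp_all
    show "emeasure M A = emeasure N A" if "A \<in> rational_balls" for A
      using that eq unfolding rational_balls_def by auto
    show "range (\<lambda>i. ball d (real (Suc i))) \<subseteq> rational_balls"
      unfolding rational_balls_def using \<open>d \<in> countable_dense\<close> by force
    have "x \<in> ball d (real (Suc (nat \<lceil>dist d x\<rceil>)))" for x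
      by simp linarith
    then show "(\<Union>i. ball d (real (Suc i))) = UNIV"
      by blast
    show "emeasure M (ball d (real (Suc i))) \<noteq> \<infinity>" for i
    proof -
      have "emeasure M (ball d (real (Suc i))) \<le> emeasure M UNIV"
        by (rule emeasure_mono) (simp_all add: sets)
      then show ?thesis
        using fin by (auto simp: top_unique)
    qed
  qed
qed

lemma emeasure_compl_closed_support:
  fixes M :: "'e measure"
  assumes "sets M = sets borel"
  shows "emeasure M (UNIV - closed_support M) = 0"
proof -
  define I where
    "I = {(d, q). d \<in> countable_dense \<and> q \<in> \<rat> \<and> q > 0 \<and> emeasure M (ball d q) = 0}"
  have "I \<subseteq> countable_dense \<times> \<rat>"
    unfolding I_def by auto
  then have "countable I"
    by (rule countable_subset) (intro countable_SIGMA countable_countable_dense countable_rat)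
  moreover have "(\<lambda>(d, q). ball d q) i \<in> null_sets M" if "i \<in> I" for i
  proof -
    obtain d q where "i = (d, q)" "emeasure M (ball d q) = 0"
      using \<open>i \<in> I\<close> unfolding I_def by blast
    then show ?thesis
      using assms by (simp add: null_sets_def)
  qed
  ultimately have "(\<Union>i\<in>I. (\<lambda>(d, q). ball d q) i) \<in> null_sets M"
    by (rule null_sets_UN')
  moreover have "UNIV - closed_support M \<subseteq> (\<Union>i\<in>I. (\<lambda>(d, q). ball d q) i)"
  proof
    fix x assume "x \<in> UNIV - closed_support M"
    then obtain U where U: "open U" "x \<in> U" "emeasure M U = 0"
      using not_in_closed_support by blast
    obtain d q where dq: "d \<in> countable_dense" "q \<in> \<rat>" "q > 0" "x \<in> ball d q" "ball d q \<subseteq> U"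
      using U(1,2) by (rule rational_ball_between)
    then have "emeasure M (ball d q) = 0"
      using U emeasure_mono[of "ball d q" U M] assms by simp
    then have "(d, q) \<in> I"
      unfolding I_def using dq by simp
    then show "x \<in> (\<Union>i\<in>I. (\<lambda>(d, q). ball d q) i)"
      using dq by force
  qed
  moreover have "UNIV - closed_support M \<in> sets M"
    using sets.compl_sets[OF borel_closed[OF closed_closed_support]] assms by simp
  ultimately have "UNIV - closed_support M \<in> null_sets M"
    using null_sets_subset by blast
  then show ?thesis
    by (rule null_setsD1)
qed

lemma add_mem_ball_iff:
  assumes "q > 0"
  shows "u + v \<in> ball c q \<longleftrightarrow> (\<exists>e\<in>countable_dense. u \<in> ball e q \<and> v \<in> ball (c - e) q)"
proof
  assume uv: "u + v \<in> ball c q"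
  obtain e where e: "e \<in> countable_dense" "dist e u < q"
    using countable_dense_approx[OF assms] by blast
  have "nrm ((c - e) - v) = nrm ((c - (u + v)) + (u - e))"
    by (rule arg_cong[where f = nrm]) (simp add: algebra_simps)
  also have "\<dots> \<le> max (nrm (c - (u + v))) (nrm (u - e))"
    by (rule nrm_add_le_max)
  also have "\<dots> < q"
    using uv e(2) nrm_minus_commute[of e u] by (simp add: dist_nrm)
  finally show "\<exists>e\<in>countable_dense. u \<in> ball e q \<and> v \<in> ball (c - e) q"
    using e by (auto simp: dist_nrm)
next
  assume "\<exists>e\<in>countable_dense. u \<in> ball e q \<and> v \<in> ball (c - e) q"
  then obtain e where e: "nrm (e - u) < q" "nrm ((c - e) - v) < q"
    by (auto simp: dist_nrm)
  have "nrm (c - (u + v)) = nrm ((e - u) + ((c - e) - v))"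
    by (rule arg_cong[where f = nrm]) (simp add: algebra_simps)
  also have "\<dots> \<le> max (nrm (e - u)) (nrm ((c - e) - v))"
    by (rule nrm_add_le_max)
  finally show "u + v \<in> ball c q"
    using e by (simp add: dist_nrm)
qed

text \<open>Without second countability as a type class the product \<open>\<sigma>\<close>-algebra is not available
  for \<open>'e\<close>, so measurability of the sum is shown by hand.\<close>
lemma borel_measurable_add:
  assumes f: "f \<in> M \<rightarrow>\<^sub>M borel" and g: "g \<in> M \<rightarrow>\<^sub>M borel"
  shows "(\<lambda>w. f w + g w :: 'e) \<in> M \<rightarrow>\<^sub>M borel"
proof -
  have "(\<lambda>w. f w + g w) -` B \<inter> space M \<in> sets M" if "B \<in> rational_balls" for B
  proof (cases "B = {}")
    case False
    then obtain c q where B: "B = ball c q" "q > 0"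
      using \<open>B \<in> rational_balls\<close> unfolding rational_balls_def by auto
    then have "(\<lambda>w. f w + g w) -` B \<inter> space M =
        (\<Union>e\<in>countable_dense. (f -` ball e q \<inter> space M) \<inter> (g -` ball (c - e) q \<inter> space M))"
      using add_mem_ball_iff[OF B(2)] by auto
    then show ?thesis
      using f g countable_countable_dense
      by (simp only:) (intro sets.countable_UN' sets.Int; auto intro!: measurable_sets)
  qed simp
  then have "(\<lambda>w. f w + g w) \<in> M \<rightarrow>\<^sub>M sigma UNIV rational_balls"
    by (intro measurable_measure_of) (auto simp: rational_balls_def)
  then show ?thesis
    using borel_eq_sigma_rational_balls by simp
qed

end

section \<open>\<open>K\<close>-Gaussian laws\<close>

locale K_gaussian_vector = separable_ultrametric_space absK smul nrm
  for absK :: "'k::{field,metric_space} \<Rightarrow> real"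
    and smul :: "'k \<Rightarrow> 'e::{ab_group_add,metric_space} \<Rightarrow> 'e"
    and nrm :: "'e \<Rightarrow> real" +
  fixes P :: "'w measure" and X :: "'w \<Rightarrow> 'e"
  assumes complete: "Topological_Spaces.complete (UNIV :: 'e set)"
    and prob_space_P: "prob_space P"
    and X_measurable: "X \<in> P \<rightarrow>\<^sub>M borel"
    and gaussian: "K_gaussian absK smul P X"
begin

definition law :: "'e measure" where
  "law = distr P borel X"

lemma sets_law [simp, measurable_cong]: "sets law = sets borel"
  and space_law [simp]: "space law = UNIV"
  unfolding law_def by simp_all

lemma prob_space_law: "prob_space law"
  unfolding law_def using prob_space_P X_measurable by (rule prob_space.prob_space_distr)

interpretation law: prob_space law
  by (rule prob_space_law)

lemma emeasure_law_UNIV: "emeasure law UNIV = 1"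
  using law.emeasure_space_1 by simp

lemma measurable_law_iff: "law \<rightarrow>\<^sub>M N = borel \<rightarrow>\<^sub>M N"
  and measurable_law_iff': "M \<rightarrow>\<^sub>M law = M \<rightarrow>\<^sub>M borel"
  by (rule measurable_cong_sets; simp)+

lemma borel_measurable_translate: "(\<lambda>y::'e. t + y) \<in> borel \<rightarrow>\<^sub>M borel"
  by (rule borel_measurable_continuous_onI[OF continuous_on_add_left])

lemma distr_translate: "distr P borel (\<lambda>\<omega>. x + X \<omega>) = distr law borel (\<lambda>y. x + y)"
  unfolding law_def using distr_distr[OF borel_measurable_translate X_measurable, of x]
  by (simp add: comp_def)

lemma shear_measurable:
  "(\<lambda>(x1, x2). (x1, smul a x1 + x2)) \<in> (law \<Otimes>\<^sub>M law) \<rightarrow>\<^sub>M (law \<Otimes>\<^sub>M law)"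
proof -
  have fst: "fst \<in> (law \<Otimes>\<^sub>M law) \<rightarrow>\<^sub>M borel" and snd: "snd \<in> (law \<Otimes>\<^sub>M law) \<rightarrow>\<^sub>M borel"
    using measurable_fst[of law law] measurable_snd[of law law] by (simp_all add: measurable_law_iff')
  have "(\<lambda>x. smul a (fst x)) \<in> (law \<Otimes>\<^sub>M law) \<rightarrow>\<^sub>M borel"
    using fst borel_measurable_continuous_onI[OF continuous_on_smul] by (rule measurable_compose)
  then have "(\<lambda>x. smul a (fst x) + snd x) \<in> (law \<Otimes>\<^sub>M law) \<rightarrow>\<^sub>M law"
    unfolding measurable_law_iff' using snd by (rule borel_measurable_add)
  then show ?thesis
    by (simp add: case_prod_beta')
qed

lemma shear_invariant:
  assumes "absK a \<le> 1"
  shows "distr (law \<Otimes>\<^sub>M law) (law \<Otimes>\<^sub>M law) (\<lambda>(x1, x2). (x1, smul a x1 + x2)) = law \<Otimes>\<^sub>M law"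
proof -
  have "\<forall>a11 a12 a21 a22. orthonormal2 absK (a11, a12) (a21, a22) \<longrightarrow>
      distr (law \<Otimes>\<^sub>M law) (law \<Otimes>\<^sub>M law)
        (\<lambda>(x1, x2). (smul a11 x1 + smul a12 x2, smul a21 x1 + smul a22 x2)) = law \<Otimes>\<^sub>M law"
    using gaussian unfolding K_gaussian_def Let_def law_def by simp
  then have "distr (law \<Otimes>\<^sub>M law) (law \<Otimes>\<^sub>M law)
      (\<lambda>(x1, x2). (smul 1 x1 + smul 0 x2, smul a x1 + smul 1 x2)) = law \<Otimes>\<^sub>M law"
    using orthonormal2_shear[OF assms] by blast
  then show ?thesis
    by simp
qed

definition support :: "'e set" where
  "support = closed_support law"

lemma closed_support: "closed support"
  unfolding support_def by (rule closed_closed_support)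

lemma support_borel [measurable]: "support \<in> sets borel"
  using closed_support by (rule borel_closed)

lemma emeasure_law_compl_support: "emeasure law (UNIV - support) = 0"
  unfolding support_def by (rule emeasure_compl_closed_support) simp

lemma emeasure_law_support: "emeasure law support = 1"
  using emeasure_compl[of "UNIV - support" law] emeasure_law_compl_support emeasure_law_UNIV
  by (simp add: Diff_Diff_Int)

lemma emeasure_law_open_pos: "x \<in> support \<Longrightarrow> open U \<Longrightarrow> x \<in> U \<Longrightarrow> emeasure law U > 0"
  unfolding support_def closed_support_iff by blast

lemma emeasure_distr_translate:
  "B \<in> sets borel \<Longrightarrow> emeasure (distr law borel (\<lambda>y. t + y)) B = emeasure law {y. t + y \<in> B}"
  by (subst emeasure_distr) (auto simp: measurable_law_iff borel_measurable_translate vimage_def)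

text \<open>Fubini applied to the shear-invariance on \<open>ball s r \<times> B\<close>: for \<open>x\<close> in \<open>ball s r\<close> the
  slice \<open>{y. a x + y \<in> B}\<close> equals \<open>{y. a s + y \<in> B}\<close> because \<open>B\<close> is a ball of radius \<open>r\<close>,
  so \<open>\<mu>(ball s r) \<mu>(B) = \<mu>(ball s r) \<mu>(B - a s)\<close> with \<open>\<mu>(ball s r) > 0\<close>.\<close>
lemma emeasure_law_translate_ball:
  assumes s: "s \<in> support" and a: "absK a \<le> 1" and r: "r > 0"
  shows "emeasure law {y. smul a s + y \<in> ball c r} = emeasure law (ball c r)"
proof -
  define sh where "sh = (\<lambda>(x1, x2). (x1, smul a x1 + x2))"
  define C where "C = ball s r"
  define B where "B = ball c r"
  define m where "m = emeasure law {y. smul a s + y \<in> B}"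
  have CB: "C \<times> B \<in> sets (law \<Otimes>\<^sub>M law)"
    unfolding C_def B_def by (intro pair_measureI) auto
  have sh: "sh \<in> (law \<Otimes>\<^sub>M law) \<rightarrow>\<^sub>M (law \<Otimes>\<^sub>M law)"
    unfolding sh_def by (rule shear_measurable)
  have slice: "Pair x -` (sh -` (C \<times> B) \<inter> space (law \<Otimes>\<^sub>M law)) = (if x \<in> C then {y. smul a s + y \<in> B} else {})" for x
  proof (cases "x \<in> C")
    case True
    then have "dist (smul a x) (smul a s) < r"
      using dist_smul[of a x s] a mult_left_le_one_le[of "dist x s" "absK a"]
      unfolding C_def by (simp add: dist_commute)
    then have "dist (smul a x + y) (smul a s + y) < r" for y
      by (simp add: dist_nrm)
    then have "smul a x + y \<in> B \<longleftrightarrow> smul a s + y \<in> B" for y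
      unfolding B_def by (metis ball_eq_if_dist_less dist_commute mem_ball)
    then show ?thesis
      using True unfolding sh_def by (auto simp: space_pair_measure)
  qed (auto simp: sh_def)
  have "emeasure law C * emeasure law B = emeasure (law \<Otimes>\<^sub>M law) (C \<times> B)"
    unfolding C_def B_def by (rule law.emeasure_pair_measure_Times[symmetric]) auto
  also have "\<dots> = emeasure (distr (law \<Otimes>\<^sub>M law) (law \<Otimes>\<^sub>M law) sh) (C \<times> B)"
    using shear_invariant[OF a] unfolding sh_def by simp
  also have "\<dots> = emeasure (law \<Otimes>\<^sub>M law) (sh -` (C \<times> B) \<inter> space (law \<Otimes>\<^sub>M law))"
    by (rule emeasure_distr[OF sh CB])
  also have "\<dots> = \<integral>\<^sup>+ x. emeasure law (Pair x -` (sh -` (C \<times> B) \<inter> space (law \<Otimes>\<^sub>M law))) \<partial>law"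
    by (rule law.emeasure_pair_measure_alt[OF measurable_sets[OF sh CB]])
  also have "\<dots> = \<integral>\<^sup>+ x. m * indicator C x \<partial>law"
    unfolding slice m_def by (intro nn_integral_cong) (simp split: split_indicator)
  also have "\<dots> = m * emeasure law C"
    by (rule nn_integral_cmult_indicator) (simp add: C_def)
  finally have "emeasure law C * emeasure law B = emeasure law C * m"
    by (simp add: mult.commute)
  moreover have "emeasure law C \<noteq> 0"
    using emeasure_law_open_pos[OF s, of C] r unfolding C_def by simp
  ultimately show ?thesis
    unfolding m_def B_def using law.emeasure_finite[of C] by (simp add: ennreal_mult_cancel_left)
qed

definition translation_invariant :: "'e \<Rightarrow> bool" where
  "translation_invariant t \<longleftrightarrow> distr law borel (\<lambda>y. t + y) = law"

lemma translation_invariant_smul_support: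
  assumes "s \<in> support" "absK a \<le> 1"
  shows "translation_invariant (smul a s)"
  unfolding translation_invariant_def
proof (rule measure_eqI_balls)
  show "emeasure (distr law borel (\<lambda>y. smul a s + y)) UNIV \<noteq> \<infinity>"
    using emeasure_distr_translate[of UNIV] emeasure_law_UNIV by simp
  show "emeasure (distr law borel (\<lambda>y. smul a s + y)) (ball c r) = emeasure law (ball c r)"
    if "r > 0" for c r
    using emeasure_distr_translate emeasure_law_translate_ball[OF assms that] by simp
qed simp_all

lemma emeasure_law_translate:
  "translation_invariant t \<Longrightarrow> B \<in> sets borel \<Longrightarrow> emeasure law {y. t + y \<in> B} = emeasure law B"
  unfolding translation_invariant_def using emeasure_distr_translate by metis

lemma translation_invariant_add_support:
  assumes t: "translation_invariant t" and x: "x \<in> support"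
  shows "t + x \<in> support"
  unfolding support_def closed_support_iff
proof (intro allI impI)
  fix U assume U: "open U \<and> t + x \<in> U"
  then have "emeasure law {y. t + y \<in> U} > 0"
    using emeasure_law_open_pos[OF x open_translate_vimage] by blast
  then show "emeasure law U > 0"
    using emeasure_law_translate[OF t] U by simp
qed

lemma zero_in_support: "0 \<in> support"
proof -
  obtain s where "s \<in> support"
    using emeasure_law_support by fastforce
  moreover have "translation_invariant (- s)"
    using translation_invariant_smul_support[OF \<open>s \<in> support\<close>, of "-1"] by (simp add: smul_minus_one)
  ultimately have "- s + s \<in> support"
    using translation_invariant_add_support by blast
  then show ?thesis
    by simp
qed

lemma support_iff_translation_invariant: "t \<in> support \<longleftrightarrow> translation_invariant t"
  using translation_invariant_smul_support[of t 1] translation_invariant_add_support[OF _ zero_in_support]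
  by auto

lemma D_submodule_support: "D_submodule absK smul support"
  unfolding D_submodule_def
  using zero_in_support translation_invariant_add_support support_iff_translation_invariant
    translation_invariant_smul_support by blast

lemma support_add_iff:
  assumes "g \<in> support"
  shows "g + y \<in> support \<longleftrightarrow> y \<in> support"
proof
  assume "g + y \<in> support"
  moreover have "- g \<in> support"
    using D_submoduleD(3)[OF D_submodule_support, of "-1" g] assms by (simp add: smul_minus_one)
  ultimately have "- g + (g + y) \<in> support"
    using D_submoduleD(2)[OF D_submodule_support] by blast
  then show "y \<in> support"
    by simp
next
  assume "y \<in> support"
  then show "g + y \<in> support"
    using D_submoduleD(2)[OF D_submodule_support] assms by blast
qed

lemma measure_law_support_ball:
  assumes "g \<in> support"
  shows "measure law (support \<inter> ball g e) = measure law (support \<inter> ball 0 e)"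
proof -
  have "dist g (g + y) = dist 0 y" for y
    by (simp add: dist_nrm)
  then have "{y. g + y \<in> support \<inter> ball g e} = support \<inter> ball 0 e"
    using support_add_iff[OF assms] by auto
  moreover have "translation_invariant g"
    using assms support_iff_translation_invariant by blast
  ultimately show ?thesis
    using emeasure_law_translate[of g "support \<inter> ball g e"] by (simp add: measure_def)
qed

lemma measure_law_support_ball_pos:
  assumes "e > 0"
  shows "measure law (support \<inter> ball 0 e) > 0"
proof -
  have "emeasure law (ball 0 e) \<le> emeasure law ((support \<inter> ball 0 e) \<union> (UNIV - support))"
    by (rule emeasure_mono) auto
  also have "\<dots> \<le> emeasure law (support \<inter> ball 0 e) + emeasure law (UNIV - support)"
    by (rule emeasure_subadditive) auto
  finally have "emeasure law (support \<inter> ball 0 e) > 0"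
    using emeasure_law_open_pos[OF zero_in_support, of "ball 0 e"] assms emeasure_law_compl_support
    by simp
  then show ?thesis
    by (simp add: law.emeasure_eq_measure)
qed

text \<open>Translates of \<open>support \<inter> ball 0 e\<close> by an \<open>e\<close>-separated family are disjoint and have
  the same positive measure, so such a family has at most \<open>1 / measure\<close> members.\<close>
lemma compact_support: "compact support"
  unfolding compact_eq_totally_bounded
proof (intro conjI allI impI)
  show "Topological_Spaces.complete support"
    using complete_Int_closed[OF complete closed_support] by simp
  fix e :: real assume "e > 0"
  define m where "m = measure law (support \<inter> ball 0 e)"
  have "m > 0"
    unfolding m_def using measure_law_support_ball_pos[OF \<open>e > 0\<close>] .
  show "\<exists>k. finite k \<and> support \<subseteq> (\<Union>x\<in>k. ball x e)"
  proof (rule finite_ball_cover_if_separated_card_le[OF \<open>e > 0\<close>])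
    fix F assume F: "finite F" "F \<subseteq> support" and sep: "pairwise (\<lambda>f f'. e \<le> dist f f') F"
    have "disjoint_family_on (\<lambda>f. support \<inter> ball f e) F"
      unfolding disjoint_family_on_def
    proof (intro ballI impI)
      fix f f' assume "f \<in> F" "f' \<in> F" "f \<noteq> f'"
      then have "e \<le> dist f f'"
        using sep unfolding pairwise_def by blast
      have "\<not> (dist f z < e \<and> dist f' z < e)" for z
        using dist_le_max[of f f' z] dist_commute[of f' z] \<open>e \<le> dist f f'\<close> by auto
      then show "(support \<inter> ball f e) \<inter> (support \<inter> ball f' e) = {}"
        by auto
    qed
    then have "measure law (\<Union>f\<in>F. support \<inter> ball f e) = (\<Sum>f\<in>F. measure law (support \<inter> ball f e))"
      using F(1) by (intro law.finite_measure_finite_Union) auto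
    also have "\<dots> = (\<Sum>f\<in>F. m)"
      unfolding m_def using measure_law_support_ball F(2) by (intro sum.cong) auto
    also have "\<dots> = real (card F) * m"
      by simp
    moreover have "measure law (\<Union>f\<in>F. support \<inter> ball f e) \<le> 1"
      by (rule law.prob_le_1)
    ultimately have "real (card F) * m \<le> 1"
      by simp
    then have "real (card F) \<le> 1 / m"
      using \<open>m > 0\<close> by (simp add: field_simps)
    then show "card F \<le> nat \<lceil>1 / m\<rceil>"
      by linarith
  qed
qed

lemma AE_X_in_support: "AE \<omega> in P. X \<omega> \<in> support"
proof -
  have "X -` (UNIV - support) \<inter> space P \<in> sets P"
    using X_measurable support_borel by (auto intro: measurable_sets)
  moreover have "{\<omega> \<in> space P. X \<omega> \<notin> support} = X -` (UNIV - support) \<inter> space P"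
    by auto
  moreover have "emeasure P (X -` (UNIV - support) \<inter> space P) = 0"
    using emeasure_law_compl_support emeasure_distr[OF X_measurable, of "UNIV - support"]
    unfolding law_def by simp
  ultimately show ?thesis
    using AE_iff_measurable[of "X -` (UNIV - support) \<inter> space P" P "\<lambda>\<omega>. X \<omega> \<in> support"] by simp
qed

lemma continuous_on_absK_dual:
  assumes "T \<in> dual_space smul"
  shows "continuous_on UNIV (\<lambda>y. absK (T y))"
proof -
  have "continuous_on UNIV T"
    using assms unfolding dual_space_def by blast
  then have "continuous_on UNIV (\<lambda>y. dist (T y) 0)"
    by (intro continuous_on_dist continuous_on_const)
  then show ?thesis
    by (simp add: dist_absK)
qed

lemma borel_measurable_absK_dual:
  "T \<in> dual_space smul \<Longrightarrow> (\<lambda>\<omega>. ereal (absK (T (X \<omega>)))) \<in> borel_measurable P"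
  by (intro borel_measurable_ereal borel_measurable_continuous_on[OF continuous_on_absK_dual X_measurable])

lemma absK_dual_le_esssup:
  assumes x: "x \<in> support" and T: "T \<in> dual_space smul"
  shows "ereal (absK (T x)) \<le> esssup P (\<lambda>\<omega>. ereal (absK (T (X \<omega>))))"
proof (rule ccontr)
  assume "\<not> ?thesis"
  then have "esssup P (\<lambda>\<omega>. ereal (absK (T (X \<omega>)))) < ereal (absK (T x))"
    by (simp add: not_le)
  then obtain z where z: "esssup P (\<lambda>\<omega>. ereal (absK (T (X \<omega>)))) < ereal z" "ereal z < ereal (absK (T x))"
    using ereal_dense2 by blast
  define U where "U = {y. z < absK (T y)}"
  have "open U"
    unfolding U_def by (rule open_Collect_less[OF continuous_on_const continuous_on_absK_dual[OF T]])
  have "AE \<omega> in P. ereal (absK (T (X \<omega>))) < ereal z"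
    using esssup_AE[of "\<lambda>\<omega>. ereal (absK (T (X \<omega>)))" P]
    by eventually_elim (rule le_less_trans[OF _ z(1)])
  then have "AE \<omega> in P. X \<omega> \<notin> U"
    unfolding U_def by eventually_elim simp
  moreover have "X -` U \<inter> space P \<in> sets P"
    using X_measurable \<open>open U\<close> by (auto intro: measurable_sets)
  moreover have "{\<omega> \<in> space P. \<not> X \<omega> \<notin> U} = X -` U \<inter> space P"
    by auto
  ultimately have "emeasure P (X -` U \<inter> space P) = 0"
    using AE_iff_measurable[of "X -` U \<inter> space P" P "\<lambda>\<omega>. X \<omega> \<notin> U"] by simp
  then have "emeasure law U = 0"
    unfolding law_def using emeasure_distr[OF X_measurable, of U] \<open>open U\<close> by simp
  moreover have "emeasure law U > 0"
    using emeasure_law_open_pos[OF x \<open>open U\<close>] z(2) unfolding U_def by simp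
  ultimately show False
    by simp
qed

lemma support_eq_dual_bound:
  "support = {x. \<forall>T \<in> dual_space smul. ereal (absK (T x)) \<le> esssup P (\<lambda>\<omega>. ereal (absK (T (X \<omega>))))}"
proof (intro equalityI subsetI CollectI ballI)
  show "ereal (absK (T x)) \<le> esssup P (\<lambda>\<omega>. ereal (absK (T (X \<omega>))))"
    if "x \<in> support" "T \<in> dual_space smul" for x T
    using absK_dual_le_esssup that .
next
  fix x assume bound: "x \<in> {x. \<forall>T \<in> dual_space smul. ereal (absK (T x)) \<le> esssup P (\<lambda>\<omega>. ereal (absK (T (X \<omega>))))}"
  show "x \<in> support"
  proof (rule ccontr)
    assume "x \<notin> support"
    then obtain T where T: "T \<in> dual_space smul" "\<And>g. g \<in> support \<Longrightarrow> absK (T g) \<le> 1" "absK (T x) > 1"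
      using separation_closed_D_submodule[OF closed_support D_submodule_support] by blast
    have "AE \<omega> in P. ereal (absK (T (X \<omega>))) \<le> 1"
      using AE_X_in_support by eventually_elim (simp add: T(2))
    then have "esssup P (\<lambda>\<omega>. ereal (absK (T (X \<omega>)))) \<le> 1"
      by (rule esssup_I[OF borel_measurable_absK_dual[OF T(1)]])
    moreover have "ereal (absK (T x)) \<le> esssup P (\<lambda>\<omega>. ereal (absK (T (X \<omega>))))"
      using bound T(1) by blast
    ultimately have "ereal (absK (T x)) \<le> 1"
      by (rule order_trans[rotated])
    then show False
      using T(3) by simp
  qed
qed

lemma distr_translate_support:
  "x \<in> support \<Longrightarrow> distr P borel (\<lambda>\<omega>. x + X \<omega>) = distr P borel X"
  using support_iff_translation_invariant unfolding distr_translate translation_invariant_def law_def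
  by simp

lemma mutually_singular_translate:
  assumes "x \<notin> support"
  shows "mutually_singular (distr P borel (\<lambda>\<omega>. x + X \<omega>)) (distr P borel X)"
  unfolding mutually_singular_def
proof (intro bexI conjI)
  have "{y. x + y \<in> support} \<subseteq> UNIV - support"
  proof
    fix y assume "y \<in> {y. x + y \<in> support}"
    then have "y + x \<in> support"
      by (simp add: add.commute)
    then show "y \<in> UNIV - support"
      using support_add_iff[of y x] assms by blast
  qed
  then have "emeasure law {y. x + y \<in> support} = 0"
    using emeasure_law_compl_support emeasure_mono[of "{y. x + y \<in> support}" "UNIV - support" law]
    by simp
  then show "emeasure (distr P borel (\<lambda>\<omega>. x + X \<omega>)) support = 0"
    unfolding distr_translate by (simp add: emeasure_distr_translate)
  show "emeasure (distr P borel X) (space (distr P borel X) - support) = 0"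
    using emeasure_law_compl_support unfolding law_def by simp
qed simp

lemma normalised_haar_on_support: "normalised_haar_on support (distr P borel X)"
  unfolding normalised_haar_on_def
proof (intro conjI ballI impI)
  show "emeasure (distr P borel X) support = 1"
    using emeasure_law_support unfolding law_def .
  show "emeasure (distr P borel X) (space (distr P borel X) - support) = 0"
    using emeasure_law_compl_support unfolding law_def by simp
  fix x A assume "x \<in> support" "A \<in> sets borel" "A \<subseteq> support"
  have "(\<lambda>y. x + y) ` A = {y. - x + y \<in> A}"
  proof (intro equalityI subsetI)
    fix z assume "z \<in> {y. - x + y \<in> A}"
    then have "x + (- x + z) \<in> (\<lambda>y. x + y) ` A"
      by blast
    then show "z \<in> (\<lambda>y. x + y) ` A"
      by simp
  qed auto
  then have "(\<lambda>y. x + y) ` A \<in> sets borel"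
    using measurable_sets[OF borel_measurable_translate \<open>A \<in> sets borel\<close>, of "- x"]
    by (simp add: vimage_def)
  moreover have "translation_invariant x"
    using support_iff_translation_invariant \<open>x \<in> support\<close> by blast
  ultimately have "emeasure law ((\<lambda>y. x + y) ` A) = emeasure law {y. x + y \<in> (\<lambda>y. x + y) ` A}"
    using emeasure_law_translate by simp
  also have "{y. x + y \<in> (\<lambda>y. x + y) ` A} = A"
    by auto
  finally show "emeasure (distr P borel X) ((\<lambda>y. x + y) ` A) = emeasure (distr P borel X) A"
    unfolding law_def .
qed simp

lemma measure_shear_preimage:
  assumes "absK a \<le> 1" and "A \<in> sets borel" "B \<in> sets borel"
  shows "measure (law \<Otimes>\<^sub>M law)
      ((\<lambda>(x1, x2). (x1, smul a x1 + x2)) -` (A \<times> B) \<inter> space (law \<Otimes>\<^sub>M law))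
    = measure law A * measure law B"
proof -
  have AB: "A \<times> B \<in> sets (law \<Otimes>\<^sub>M law)"
    using assms(2,3) by (intro pair_measureI) auto
  have "measure (law \<Otimes>\<^sub>M law)
      ((\<lambda>(x1, x2). (x1, smul a x1 + x2)) -` (A \<times> B) \<inter> space (law \<Otimes>\<^sub>M law))
    = measure (distr (law \<Otimes>\<^sub>M law) (law \<Otimes>\<^sub>M law) (\<lambda>(x1, x2). (x1, smul a x1 + x2))) (A \<times> B)"
    by (rule measure_distr[OF shear_measurable AB, symmetric])
  also have "\<dots> = measure (law \<Otimes>\<^sub>M law) (A \<times> B)"
    using shear_invariant[OF assms(1)] by simp
  also have "\<dots> = measure law A * measure law B"
    using law.emeasure_pair_measure_Times[of A law B] assms(2,3)
    by (simp add: measure_def enn2real_mult)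
  finally show ?thesis .
qed

text \<open>For \<open>0 < |\<pi>| < 1\<close> the shears by \<open>\<pi>\<^sup>n\<close> carry \<open>(UNIV - M) \<times> M\<close> to pairwise disjoint sets
  of the same measure \<open>\<mu>(UNIV - M) \<mu>(M)\<close>.\<close>
lemma measure_law_subspace_0_or_1:
  assumes "measurable_vector_subspace smul M"
  shows "measure law M = 0 \<or> measure law M = 1"
proof -
  have M: "subspace M" "M \<in> sets borel"
    using assms unfolding measurable_vector_subspace_def by auto
  interpret law2: prob_space "law \<Otimes>\<^sub>M law"
    by (rule prob_space_pair) (rule prob_space_law)+
  obtain \<pi> where \<pi>: "\<pi> \<noteq> 0" "absK \<pi> < 1"
    using ex_absK_less[of 1] by auto
  define E where "E n =
    (\<lambda>(x1, x2). (x1, smul (\<pi> ^ n) x1 + x2)) -` ((UNIV - M) \<times> M) \<inter> space (law \<Otimes>\<^sub>M law)" for n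
  have small: "absK (\<pi> ^ n) \<le> 1" for n
    using \<pi> by (simp add: absK_power power_le_one)
  have "E n \<in> law2.events" for n
    unfolding E_def using M(2) by (intro measurable_sets[OF shear_measurable] pair_measureI) auto
  moreover have "law2.prob (E n) = measure law (UNIV - M) * measure law M" for n
    unfolding E_def using M(2) by (intro measure_shear_preimage small) auto
  moreover have "disjoint_family E"
    unfolding disjoint_family_on_def
  proof (intro ballI impI)
    fix n m :: nat assume "n \<noteq> m"
    have "absK \<pi> ^ n \<noteq> absK \<pi> ^ m"
      using \<open>n \<noteq> m\<close> \<pi>(2) absK_pos[OF \<pi>(1)] by (simp add: power_inject_exp')
    then have "\<pi> ^ n \<noteq> \<pi> ^ m"
      by (metis absK_power)
    then show "E n \<inter> E m = {}"
      unfolding E_def using mem_subspace_if_shears_mem[OF M(1)] by auto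
  qed
  ultimately have "measure law (UNIV - M) * measure law M = 0"
    by (intro law2.disjoint_family_equal_prob_eq_0[where E = E]) auto
  moreover have "measure law (UNIV - M) = 1 - measure law M"
    using law.prob_compl[of M] M by (simp add: Compl_eq_Diff_UNIV)
  ultimately show ?thesis
    by auto
qed

lemma support_subset_if_measure_law_eq_1:
  assumes M: "subspace M" "M \<in> sets borel" and "measure law M = 1"
  shows "support \<subseteq> M"
proof
  fix s assume "s \<in> support"
  then have "measure law {y. s + y \<in> M} = measure law M"
    using emeasure_law_translate[of s M] support_iff_translation_invariant M(2)
    by (simp add: measure_def)
  then obtain y where "y \<in> M" "s + y \<in> M"
    using law.Int_not_empty_if_prob_eq_1[of M "{y. s + y \<in> M}"] \<open>measure law M = 1\<close> by auto
  then have "(s + y) - y \<in> M"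
    using subspace_diff[OF M(1)] by blast
  then show "s \<in> M"
    by simp
qed

lemma prob_X_in_subspace:
  assumes "measurable_vector_subspace smul M"
  shows "prob_space.prob P {\<omega> \<in> space P. X \<omega> \<in> M} = (if support \<subseteq> M then 1 else 0)"
proof -
  have M: "subspace M" "M \<in> sets borel"
    using assms unfolding measurable_vector_subspace_def by auto
  have "{\<omega> \<in> space P. X \<omega> \<in> M} = X -` M \<inter> space P"
    by auto
  then have "prob_space.prob P {\<omega> \<in> space P. X \<omega> \<in> M} = measure law M"
    unfolding law_def using measure_distr[OF X_measurable M(2)] by simp
  moreover have "measure law M = 1" if "support \<subseteq> M"
  proof -
    have "1 \<le> emeasure law M"
      using emeasure_law_support emeasure_mono[of support M law] that M(2) by simp
    then have "emeasure law M = 1"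
      using law.emeasure_le_1[of M] by (rule antisym[rotated])
    then show ?thesis
      by (simp add: law.emeasure_eq_measure)
  qed
  ultimately show ?thesis
    using measure_law_subspace_0_or_1[OF assms] support_subset_if_measure_law_eq_1[OF M] by auto
qed

end

theorem theorem4p6:
  fixes absK :: "'k::{field,metric_space} \<Rightarrow> real"
    and smul :: "'k \<Rightarrow> 'e::{ab_group_add,metric_space} \<Rightarrow> 'e"
    and nrm :: "'e \<Rightarrow> real"
    and P :: "'w measure"
    and X :: "'w \<Rightarrow> 'e"
    and S :: "'e set"
  assumes K: "local_field absK"
    and E: "K_banach_space absK smul nrm"
    and sep: "separable_space TYPE('e)"
    and P: "prob_space P"
    and Xmeas: "X \<in> P \<rightarrow>\<^sub>M borel"
    and gauss: "K_gaussian absK smul P X"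
    and S_def: "S = {x. \<forall>T \<in> dual_space smul.
                   ereal (absK (T x)) \<le> esssup P (\<lambda>\<omega>. ereal (absK (T (X \<omega>))))}"
  shows "D_submodule absK smul S \<and>
         (\<forall>x\<in>S. distr P borel (\<lambda>\<omega>. x + X \<omega>) = distr P borel X) \<and>
         (\<forall>x. x \<notin> S \<longrightarrow>
              mutually_singular (distr P borel (\<lambda>\<omega>. x + X \<omega>)) (distr P borel X)) \<and>
         S = closed_support (distr P borel X) \<and>
         compact S \<and>
         normalised_haar_on S (distr P borel X) \<and>
         (\<forall>M. measurable_vector_subspace smul M \<longrightarrow>
              prob_space.prob P {\<omega> \<in> space P. X \<omega> \<in> M} = (if S \<subseteq> M then 1 else 0))"
proof -
  have "K_normed_space absK smul nrm" and "Topological_Spaces.complete (UNIV :: 'e set)"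
    using E unfolding K_banach_space_def by auto
  then interpret K_gaussian_vector absK smul nrm P X
    using K sep P Xmeas gauss
    by (simp add: K_gaussian_vector_def K_gaussian_vector_axioms_def separable_ultrametric_space_def
        separable_ultrametric_space_axioms_def ultrametric_normed_space_def
        ultrametric_normed_space_axioms_def local_field_abs_def)
  have "S = support"
    using S_def support_eq_dual_bound by simp
  moreover have "support = closed_support (distr P borel X)"
    unfolding support_def law_def ..
  ultimately show ?thesis
    using D_submodule_support distr_translate_support mutually_singular_translate compact_support
      normalised_haar_on_support prob_X_in_subspace by simp
qed

end
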